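(* Let $C=(c_{ij})$ be an extreme point of $\mathcal{E}_n$. Define the $2n\times 2n$ real symmetric matrix $$P_C=\sum_{i,j=1}^n\frac14\begin{pmatrix}1+c_{ij}&1-c_{ij}\\ 1-c_{ij}&1+c_{ij}\end{pmatrix}\otimes e_ie_j^{\sf T},$$ where $e_1,\ldots,e_n$ is the standard basis of $\mathbb{R}^n$ and $\otimes$ is the Kronecker product. Then $P_C$ is completely positive semidefinite and $\mathrm{cpsd\text{-}rank}(P_C)\ge 2^{\lfloor \mathrm{rank}(C)/2\rfloor}$.
   Context: $\mathcal{E}_n$ is the elliptope: the set of real symmetric positive semidefinite $n\times n$ matrices with all diagonal entries equal to $1$; an extreme point is a point not expressible as a proper convex combination of two distinct points of $\mathcal{E}_n$. A symmetric $N\times N$ matrix $X$ is completely positive semidefinite (cpsd) if there exist $d\ge1$ and $d\times d$ complex Hermitian positive semidefinite matrices $P_1,\ldots,P_N$ with $X_{ij}=\mathrm{Tr}(P_iP_j)$ for all $i,j\in\{1,\ldots,N\}$. The cpsd-rank of a cpsd matrix $X$ is the least such $d$. *)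

theory Defs
  imports "HOL-Analysis.Analysis"
begin

definition psd_real :: "real^'n^'n \<Rightarrow> bool" where
  "psd_real A \<longleftrightarrow> transpose A = A \<and> (\<forall>x. 0 \<le> x \<bullet> (A *v x))"

definition elliptope :: "(real^'n^'n) set" where
  "elliptope = {C. psd_real C \<and> (\<forall>i. C $ i $ i = 1)}"

text \<open>Kronecker product, rows/columns indexed by pairs (a,i) in lexicographic order.\<close>
definition kron :: "real^'m^'m \<Rightarrow> real^'n^'n \<Rightarrow> real^('m \<times> 'n)^('m \<times> 'n)" where
  "kron A B = (\<chi> p q. A $ fst p $ fst q * B $ snd p $ snd q)"

definition unit_mat :: "'n \<Rightarrow> 'n \<Rightarrow> real^'n^'n" where
  "unit_mat i j = (\<chi> k l. if k = i \<and> l = j then 1 else 0)"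

definition blk :: "real \<Rightarrow> real^2^2" where
  "blk c = (\<chi> a b. (1/4) * (if a = b then 1 + c else 1 - c))"

definition P_mat :: "real^'n^'n \<Rightarrow> real^(2 \<times> 'n)^(2 \<times> 'n)" where
  "P_mat C = (\<Sum>i\<in>UNIV. \<Sum>j\<in>UNIV. kron (blk (C $ i $ j)) (unit_mat i j))"

text \<open>Complex d x d matrices are represented as functions nat => nat => complex,
  only entries with indices < d being relevant.  Hermitian PSD:\<close>
definition herm_psd :: "nat \<Rightarrow> (nat \<Rightarrow> nat \<Rightarrow> complex) \<Rightarrow> bool" where
  "herm_psd d P \<longleftrightarrow> (\<forall>k<d. \<forall>l<d. P k l = cnj (P l k)) \<and>
     (\<forall>v::nat \<Rightarrow> complex. let q = (\<Sum>k<d. \<Sum>l<d. cnj (v k) * P k l * v l) in Im q = 0 \<and> 0 \<le> Re q)"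

definition tr_prod :: "nat \<Rightarrow> (nat \<Rightarrow> nat \<Rightarrow> complex) \<Rightarrow> (nat \<Rightarrow> nat \<Rightarrow> complex) \<Rightarrow> complex" where
  "tr_prod d P Q = (\<Sum>k<d. \<Sum>l<d. P k l * Q l k)"

definition cpsd_factorization :: "real^'k^'k \<Rightarrow> nat \<Rightarrow> bool" where
  "cpsd_factorization X d \<longleftrightarrow> d \<ge> 1 \<and> (\<exists>P :: 'k \<Rightarrow> nat \<Rightarrow> nat \<Rightarrow> complex.
      (\<forall>i. herm_psd d (P i)) \<and> (\<forall>i j. complex_of_real (X $ i $ j) = tr_prod d (P i) (P j)))"

definition cpsd :: "real^'k^'k \<Rightarrow> bool" where
  "cpsd X \<longleftrightarrow> transpose X = X \<and> (\<exists>d. cpsd_factorization X d)"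

definition cpsd_rank :: "real^'k^'k \<Rightarrow> nat" where
  "cpsd_rank X = (LEAST d. cpsd_factorization X d)"

end

theory Submission
  imports Defs "HOL-Library.Function_Algebras"
begin

text \<open>Write the extreme point \<open>C\<close> as the Gram matrix of unit vectors \<open>\<alpha>\<^sub>i \<in> \<real>\<^sup>s\<close>.  Jordan--Wigner
  matrices turn them into Hermitian involutions \<open>Y\<^sub>i\<close> of size \<open>2\<^sup>s\<close> with \<open>Y\<^sub>i Y\<^sub>j + Y\<^sub>j Y\<^sub>i = 2 C\<^sub>i\<^sub>j I\<close>,
  and the suitably scaled spectral projections \<open>(I \<plusminus> Y\<^sub>i)/2\<close> form a cpsd factorization of \<open>P\<^sub>C\<close>.

  Conversely, let \<open>A\<^sub>i, B\<^sub>i\<close> be the factors of a cpsd factorization of size \<open>d\<close> for the two blocks.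
  The traces force \<open>A\<^sub>i + B\<^sub>i = Q\<close> for a single nonzero \<open>Q\<close> and \<open>A\<^sub>i B\<^sub>i = 0\<close>, so the differences
  \<open>X\<^sub>i = A\<^sub>i - B\<^sub>i\<close> all square to \<open>Q\<^sup>2\<close> and have Gram matrix \<open>C\<close>.  Expanding \<open>X\<^sub>i = \<Sum>\<^sub>k \<alpha>\<^sub>i\<^sub>k Y\<^sub>k\<close>
  in a dual frame, the identities \<open>X\<^sub>i\<^sup>2 = Q\<^sup>2\<close> say that the symmetric family of anticommutator defects
  \<open>Y\<^sub>k Y\<^sub>l + Y\<^sub>l Y\<^sub>k - 2 \<delta>\<^sub>k\<^sub>l Q\<^sup>2\<close> is annihilated by every \<open>\<alpha>\<^sub>i \<otimes> \<alpha>\<^sub>i\<close>; by extremality of \<open>C\<close> it vanishes.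
  Hence \<open>2 \<lfloor>rank C / 2\<rfloor>\<close> of the \<open>Y\<^sub>k\<close> generate a Clifford algebra inside the \<open>d \<times> d\<close> matrices, and
  linear independence of its \<open>2\<^bsup>2 \<lfloor>rank C / 2\<rfloor>\<^esup>\<close> monomials gives the bound.\<close>

section \<open>Complex square matrices\<close>

text \<open>As in the definition of \<open>herm_psd\<close>, a complex matrix is a function \<open>nat \<Rightarrow> nat \<Rightarrow> complex\<close>; the
  dimension \<open>d\<close> is an explicit parameter of every operation, and \<open>mat_dim d A\<close> says that \<open>A\<close> vanishes
  outside the leading \<open>d \<times> d\<close> block.\<close>

type_synonym cmat = "nat \<Rightarrow> nat \<Rightarrow> complex"

definition mat_mult :: "nat \<Rightarrow> cmat \<Rightarrow> cmat \<Rightarrow> cmat" where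
  "mat_mult d A B = (\<lambda>k l. if k < d \<and> l < d then (\<Sum>j<d. A k j * B j l) else 0)"
definition mat_tr :: "nat \<Rightarrow> cmat \<Rightarrow> complex" where
  "mat_tr d A = (\<Sum>k<d. A k k)"
definition mat_id :: "nat \<Rightarrow> cmat" where
  "mat_id d = (\<lambda>k l. if k < d \<and> l < d \<and> k = l then 1 else 0)"
definition mat_scale :: "complex \<Rightarrow> cmat \<Rightarrow> cmat" where
  "mat_scale c A = (\<lambda>k l. c * A k l)"
definition mat_adj :: "cmat \<Rightarrow> cmat" where
  "mat_adj A = (\<lambda>k l. cnj (A l k))"
definition mat_dim :: "nat \<Rightarrow> cmat \<Rightarrow> bool" where
  "mat_dim d A \<longleftrightarrow> (\<forall>k l. \<not> (k < d \<and> l < d) \<longrightarrow> A k l = 0)"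
definition mat_trunc :: "nat \<Rightarrow> cmat \<Rightarrow> cmat" where
  "mat_trunc d A = (\<lambda>k l. if k < d \<and> l < d then A k l else 0)"

lemma sum_apply2: "(\<Sum>i\<in>I. f i) k l = (\<Sum>i\<in>I. f i k l)" for f :: "'a \<Rightarrow> cmat"
  by (induction I rule: infinite_finite_induct) auto

lemma mat_dim_mult[simp]: "mat_dim d (mat_mult d A B)" unfolding mat_dim_def mat_mult_def by meson
lemma mat_dim_id[simp]: "mat_dim d (mat_id d)" by (simp add: mat_dim_def mat_id_def)
lemma mat_dim_trunc[simp]: "mat_dim d (mat_trunc d A)" unfolding mat_dim_def mat_trunc_def by simp
lemma mat_dim_add[simp]: "mat_dim d A \<Longrightarrow> mat_dim d B \<Longrightarrow> mat_dim d (A + B)" by (simp add: mat_dim_def)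
lemma mat_dim_diff[simp]: "mat_dim d A \<Longrightarrow> mat_dim d B \<Longrightarrow> mat_dim d (A - B)" by (simp add: mat_dim_def)
lemma mat_dim_scale[simp]: "mat_dim d A \<Longrightarrow> mat_dim d (mat_scale c A)" by (simp add: mat_dim_def mat_scale_def)
lemma mat_dim_zero[simp]: "mat_dim d 0" by (simp add: mat_dim_def)
lemma mat_dim_sum[simp]:
  "(\<And>i. i \<in> I \<Longrightarrow> mat_dim d (f i)) \<Longrightarrow> mat_dim d (\<Sum>i\<in>I. f i)"
  by (induction I rule: infinite_finite_induct) simp_all

lemma mat_dim_eqI:
  assumes "mat_dim d A" "mat_dim d B" "\<And>k l. k < d \<Longrightarrow> l < d \<Longrightarrow> A k l = B k l" shows "A = B"
proof (intro ext)
  fix k l show "A k l = B k l"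
    using assms unfolding mat_dim_def by (cases "k < d \<and> l < d") auto
qed

lemma mat_mult_in: "k < d \<Longrightarrow> l < d \<Longrightarrow> mat_mult d A B k l = (\<Sum>j<d. A k j * B j l)"
  by (simp add: mat_mult_def)

lemma mat_mult_assoc: "mat_mult d (mat_mult d A B) E = mat_mult d A (mat_mult d B E)"
proof (rule mat_dim_eqI[OF mat_dim_mult mat_dim_mult])
  fix k l assume kl: "k < d" "l < d"
  have "mat_mult d (mat_mult d A B) E k l = (\<Sum>x<d. (\<Sum>j<d. A k j * B j x) * E x l)"
    using kl by (simp add: mat_mult_in)
  also have "\<dots> = (\<Sum>x<d. A k x * (\<Sum>j<d. B x j * E j l))"
    unfolding sum_distrib_left sum_distrib_right mult.assoc by (rule sum.swap)
  also have "\<dots> = mat_mult d A (mat_mult d B E) k l"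
    using kl by (simp add: mat_mult_in)
  finally show "mat_mult d (mat_mult d A B) E k l = mat_mult d A (mat_mult d B E) k l" .
qed

lemma mat_mult_add_left: "mat_mult d (A + B) E = mat_mult d A E + mat_mult d B E"
  by (intro ext) (auto simp: mat_mult_def distrib_right sum.distrib)
lemma mat_mult_add_right: "mat_mult d E (A + B) = mat_mult d E A + mat_mult d E B"
  by (intro ext) (auto simp: mat_mult_def distrib_left sum.distrib)
lemma mat_mult_diff_left: "mat_mult d (A - B) E = mat_mult d A E - mat_mult d B E"
  by (intro ext) (auto simp: mat_mult_def left_diff_distrib sum_subtractf)
lemma mat_mult_diff_right: "mat_mult d E (A - B) = mat_mult d E A - mat_mult d E B"
  by (intro ext) (auto simp: mat_mult_def right_diff_distrib sum_subtractf)
lemma mat_mult_scale_left: "mat_mult d (mat_scale c A) E = mat_scale c (mat_mult d A E)"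
  by (intro ext) (auto simp: mat_mult_def mat_scale_def sum_distrib_left mult.assoc)
lemma mat_mult_scale_right: "mat_mult d E (mat_scale c A) = mat_scale c (mat_mult d E A)"
  by (intro ext) (auto simp: mat_mult_def mat_scale_def sum_distrib_left mult.assoc mult.left_commute)
lemma mat_mult_zero_left[simp]: "mat_mult d 0 A = 0" by (simp add: mat_mult_def fun_eq_iff)
lemma mat_mult_zero_right[simp]: "mat_mult d A 0 = 0" by (simp add: mat_mult_def fun_eq_iff)
lemma mat_mult_sum_left: "mat_mult d (\<Sum>i\<in>I. f i) E = (\<Sum>i\<in>I. mat_mult d (f i) E)"
proof (induction I rule: infinite_finite_induct)
  case (infinite A) then show ?case by (simp only: sum.infinite mat_mult_zero_left not_False_eq_True)
next
  case empty then show ?case by (simp only: sum.empty mat_mult_zero_left)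
next
  case (insert x F) then show ?case by (simp only: sum.insert mat_mult_add_left not_False_eq_True)
qed
lemma mat_mult_sum_right: "mat_mult d E (\<Sum>i\<in>I. f i) = (\<Sum>i\<in>I. mat_mult d E (f i))"
proof (induction I rule: infinite_finite_induct)
  case (infinite A) then show ?case by (simp only: sum.infinite mat_mult_zero_right not_False_eq_True)
next
  case empty then show ?case by (simp only: sum.empty mat_mult_zero_right)
next
  case (insert x F) then show ?case by (simp only: sum.insert mat_mult_add_right not_False_eq_True)
qed

lemma mat_id_sum_left: "k < d \<Longrightarrow> (\<Sum>j<d. mat_id d k j * A j l) = A k l"
  by (simp add: mat_id_def if_distrib[of "\<lambda>x. x * _"] cong: if_cong)
lemma mat_id_sum_right: "l < d \<Longrightarrow> (\<Sum>j<d. A k j * mat_id d j l) = A k l"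
  by (simp add: mat_id_def if_distrib[of "\<lambda>x. _ * x"] cong: if_cong)
lemma mat_mult_id_left_in: "k < d \<Longrightarrow> l < d \<Longrightarrow> mat_mult d (mat_id d) A k l = A k l"
  by (subst mat_mult_in, assumption, assumption) (rule mat_id_sum_left)
lemma mat_mult_id_right_in: "k < d \<Longrightarrow> l < d \<Longrightarrow> mat_mult d A (mat_id d) k l = A k l"
  by (subst mat_mult_in, assumption, assumption) (rule mat_id_sum_right)
lemma mat_mult_id_left: "mat_dim d A \<Longrightarrow> mat_mult d (mat_id d) A = A"
  by (rule mat_dim_eqI[of d]) (simp_all add: mat_mult_id_left_in)
lemma mat_mult_id_right: "mat_dim d A \<Longrightarrow> mat_mult d A (mat_id d) = A"
  by (rule mat_dim_eqI[of d]) (simp_all add: mat_mult_id_right_in)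

lemma mat_scale_add: "mat_scale c (A + B) = mat_scale c A + mat_scale c B" by (simp add: fun_eq_iff mat_scale_def distrib_left)
lemma mat_scale_diff: "mat_scale c (A - B) = mat_scale c A - mat_scale c B" by (simp add: fun_eq_iff mat_scale_def right_diff_distrib)
lemma mat_scale_scale: "mat_scale a (mat_scale b A) = mat_scale (a*b) A" by (simp add: fun_eq_iff mat_scale_def)
lemma mat_scale_one[simp]: "mat_scale 1 A = A" by (simp add: fun_eq_iff mat_scale_def)
lemma mat_scale_zero[simp]: "mat_scale 0 A = 0" "mat_scale c 0 = 0" by (simp_all add: fun_eq_iff mat_scale_def)
lemma sum_mat_scale: "(\<Sum>i\<in>I. mat_scale (f i) A) = mat_scale (\<Sum>i\<in>I. f i) A"
  by (simp add: fun_eq_iff mat_scale_def sum_apply2 sum_distrib_right)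
lemma mat_scale_add_left: "mat_scale (a + b) A = mat_scale a A + mat_scale b A" by (simp add: fun_eq_iff mat_scale_def distrib_right)
lemma mat_mult_neg_left: "mat_mult d (- A) B = - mat_mult d A B"
  by (simp add: fun_eq_iff mat_mult_def sum_negf)
lemma mat_scale_minus_one: "mat_scale (-1) A = - A" by (simp add: fun_eq_iff mat_scale_def)
lemma mat_mult_neg_right: "mat_mult d A (- B) = - mat_mult d A B"
  by (simp add: fun_eq_iff mat_mult_def sum_negf)
lemma mat_scale_neg: "mat_scale c (- A) = mat_scale (- c) A" by (simp add: fun_eq_iff mat_scale_def)
lemma mat_tr_neg: "mat_tr d (- A) = - mat_tr d A" by (simp add: mat_tr_def sum_negf)
lemma mat_add_self: "A + A = mat_scale 2 A" by (simp add: fun_eq_iff mat_scale_def)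
lemma mat_scale_cancel: "mat_scale c A = mat_scale c B \<Longrightarrow> c \<noteq> 0 \<Longrightarrow> A = B"
  by (simp add: fun_eq_iff mat_scale_def)

lemma mat_tr_add: "mat_tr d (A + B) = mat_tr d A + mat_tr d B" by (simp add: mat_tr_def sum.distrib)
lemma mat_tr_diff: "mat_tr d (A - B) = mat_tr d A - mat_tr d B" by (simp add: mat_tr_def sum_subtractf)
lemma mat_tr_scale: "mat_tr d (mat_scale c A) = c * mat_tr d A" by (simp add: mat_tr_def mat_scale_def sum_distrib_left)
lemma mat_tr_zero[simp]: "mat_tr d 0 = 0" by (simp add: mat_tr_def)
lemma mat_tr_sum: "mat_tr d (\<Sum>i\<in>I. f i) = (\<Sum>i\<in>I. mat_tr d (f i))"
  unfolding mat_tr_def sum_apply2 by (rule sum.swap)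
lemma mat_tr_id: "mat_tr d (mat_id d) = of_nat d" by (simp add: mat_tr_def mat_id_def)

lemma mat_tr_mult_comm: "mat_tr d (mat_mult d A B) = mat_tr d (mat_mult d B A)"
proof -
  have "mat_tr d (mat_mult d A B) = (\<Sum>k<d. \<Sum>j<d. A k j * B j k)" by (simp add: mat_tr_def mat_mult_in)
  also have "\<dots> = (\<Sum>j<d. \<Sum>k<d. B j k * A k j)" by (subst sum.swap) (simp add: mult.commute)
  also have "\<dots> = mat_tr d (mat_mult d B A)" by (simp add: mat_tr_def mat_mult_in)
  finally show ?thesis .
qed

lemma tr_prod_eq_mat_tr: "tr_prod d P Q = mat_tr d (mat_mult d P Q)"
  by (simp add: tr_prod_def mat_tr_def mat_mult_def)

lemma mat_adj_add: "mat_adj (A + B) = mat_adj A + mat_adj B" by (simp add: fun_eq_iff mat_adj_def)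
lemma mat_adj_diff: "mat_adj (A - B) = mat_adj A - mat_adj B" by (simp add: fun_eq_iff mat_adj_def)
lemma mat_adj_scale: "mat_adj (mat_scale c A) = mat_scale (cnj c) (mat_adj A)" by (simp add: fun_eq_iff mat_adj_def mat_scale_def)
lemma mat_adj_mult: "mat_adj (mat_mult d A B) = mat_mult d (mat_adj B) (mat_adj A)"
  by (simp add: fun_eq_iff mat_adj_def mat_mult_def mult.commute)
lemma mat_adj_sum: "mat_adj (\<Sum>i\<in>I. f i) = (\<Sum>i\<in>I. mat_adj (f i))"
  by (simp add: fun_eq_iff mat_adj_def sum_apply2)

lemma mat_tr_mult_adj: "mat_tr d (mat_mult d A (mat_adj A)) = of_real (\<Sum>k<d. \<Sum>l<d. (cmod (A k l))\<^sup>2)"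
proof -
  have "mat_tr d (mat_mult d A (mat_adj A)) = (\<Sum>k<d. \<Sum>l<d. A k l * cnj (A k l))"
    by (simp add: mat_tr_def mat_mult_def mat_adj_def)
  also have "\<dots> = (\<Sum>k<d. \<Sum>l<d. of_real ((cmod (A k l))\<^sup>2))"
    by (simp only: complex_norm_square)
  finally show ?thesis by (simp only: of_real_sum)
qed

lemma mat_eq_0_of_tr_mult_adj: assumes "mat_dim d A" "mat_tr d (mat_mult d A (mat_adj A)) = 0" shows "A = 0"
proof (rule mat_dim_eqI[OF assms(1) mat_dim_zero])
  fix k l assume kl: "k < d" "l < d"
  have "(\<Sum>k<d. \<Sum>l<d. (cmod (A k l))\<^sup>2) = 0" using assms(2) unfolding mat_tr_mult_adj of_real_eq_0_iff .
  then have "\<forall>k\<in>{..<d}. (\<Sum>l<d. (cmod (A k l))\<^sup>2) = 0"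
    by (subst (asm) sum_nonneg_eq_0_iff) (auto intro: sum_nonneg)
  then have "(\<Sum>l<d. (cmod (A k l))\<^sup>2) = 0" using kl by auto
  then have "\<forall>l\<in>{..<d}. (cmod (A k l))\<^sup>2 = 0"
    by (subst (asm) sum_nonneg_eq_0_iff) auto
  then show "A k l = 0 k l" using kl by auto
qed

lemma mat_tr_mult_adj_pos: assumes "mat_dim d A" "A \<noteq> 0"
  shows "Re (mat_tr d (mat_mult d A (mat_adj A))) > 0" "Im (mat_tr d (mat_mult d A (mat_adj A))) = 0"
proof -
  have ge: "(\<Sum>k<d. \<Sum>l<d. (cmod (A k l))\<^sup>2) \<ge> 0" by (intro sum_nonneg) auto
  have "mat_tr d (mat_mult d A (mat_adj A)) \<noteq> 0" using mat_eq_0_of_tr_mult_adj assms by blast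
  then have "(\<Sum>k<d. \<Sum>l<d. (cmod (A k l))\<^sup>2) \<noteq> 0" unfolding mat_tr_mult_adj of_real_eq_0_iff .
  then show "Re (mat_tr d (mat_mult d A (mat_adj A))) > 0" using ge unfolding mat_tr_mult_adj Re_complex_of_real by linarith
  show "Im (mat_tr d (mat_mult d A (mat_adj A))) = 0" unfolding mat_tr_mult_adj Im_complex_of_real ..
qed

definition hermitian :: "cmat \<Rightarrow> bool" where "hermitian A \<longleftrightarrow> mat_adj A = A"

lemma hermitian_add[simp]: "hermitian A \<Longrightarrow> hermitian B \<Longrightarrow> hermitian (A + B)" by (simp add: hermitian_def mat_adj_add)
lemma hermitian_diff[simp]: "hermitian A \<Longrightarrow> hermitian B \<Longrightarrow> hermitian (A - B)" by (simp add: hermitian_def mat_adj_diff)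
lemma hermitian_scale_real[simp]: "hermitian A \<Longrightarrow> hermitian (mat_scale (of_real r) A)" by (simp add: hermitian_def mat_adj_scale)
lemma hermitian_id[simp]: "hermitian (mat_id d)" by (auto simp: hermitian_def mat_adj_def mat_id_def fun_eq_iff)
lemma hermitian_sum[simp]:
  "(\<And>i. i \<in> I \<Longrightarrow> hermitian (f i)) \<Longrightarrow> hermitian (\<Sum>i\<in>I. f i)"
  by (simp add: hermitian_def mat_adj_sum)

lemma hermitian_eq_0_of_tr_sq:
  "mat_dim d A \<Longrightarrow> hermitian A \<Longrightarrow> mat_tr d (mat_mult d A A) = 0 \<Longrightarrow> A = 0"
  using mat_eq_0_of_tr_mult_adj by (metis hermitian_def)

lemma hermitian_eqI_tr:
  assumes "mat_dim d X" "mat_dim d W" "hermitian X" "hermitian W"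
    and "mat_tr d (mat_mult d X X) = mat_tr d (mat_mult d X W)"
    and "mat_tr d (mat_mult d W W) = mat_tr d (mat_mult d X W)"
  shows "X = W"
proof -
  have "mat_tr d (mat_mult d (X - W) (X - W)) = 0"
    using assms(5,6) mat_tr_mult_comm[of d W X]
    by (simp add: mat_mult_diff_left mat_mult_diff_right mat_tr_diff)
  then have "X - W = 0" using assms(1-4) by (intro hermitian_eq_0_of_tr_sq[of d]) simp_all
  then show ?thesis by simp
qed

section \<open>Positive semidefinite matrices\<close>

definition sesq :: "nat \<Rightarrow> cmat \<Rightarrow> (nat \<Rightarrow> complex) \<Rightarrow> (nat \<Rightarrow> complex) \<Rightarrow> complex" where
  "sesq d P v w = (\<Sum>k<d. \<Sum>l<d. cnj (v k) * P k l * w l)"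

definition unit_vec :: "nat \<Rightarrow> nat \<Rightarrow> complex" where "unit_vec p = (\<lambda>k. if k = p then 1 else 0)"

lemma herm_psd_iff_sesq: "herm_psd d P \<longleftrightarrow> (\<forall>k<d. \<forall>l<d. P k l = cnj (P l k)) \<and>
     (\<forall>v. Im (sesq d P v v) = 0 \<and> 0 \<le> Re (sesq d P v v))"
  by (simp add: herm_psd_def sesq_def Let_def)

lemma sesq_add_left: "sesq d P (\<lambda>k. x k + y k) w = sesq d P x w + sesq d P y w"
  by (simp add: sesq_def distrib_left distrib_right sum.distrib)
lemma sesq_add_right: "sesq d P w (\<lambda>k. x k + y k) = sesq d P w x + sesq d P w y"
  by (simp add: sesq_def distrib_left distrib_right sum.distrib)
lemma sesq_scale_left: "sesq d P (\<lambda>k. c * x k) w = cnj c * sesq d P x w"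
  by (simp add: sesq_def sum_distrib_left mult.assoc)
lemma sesq_scale_right: "sesq d P w (\<lambda>k. c * x k) = c * sesq d P w x"
  by (simp add: sesq_def sum_distrib_left mult.assoc mult.left_commute)

lemma sesq_hermitian: assumes "\<forall>k<d. \<forall>l<d. P k l = cnj (P l k)" shows "sesq d P w v = cnj (sesq d P v w)"
proof -
  have "sesq d P w v = (\<Sum>k<d. \<Sum>l<d. cnj (w k) * P k l * v l)" by (simp add: sesq_def)
  also have "\<dots> = (\<Sum>l<d. \<Sum>k<d. cnj (w k) * P k l * v l)" by (rule sum.swap)
  also have "\<dots> = (\<Sum>l<d. \<Sum>k<d. cnj (cnj (v l) * P l k * w k))"
  proof (intro sum.cong refl)
    fix l k assume "l \<in> {..<d}" "k \<in> {..<d}"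
    then have "P k l = cnj (P l k)" using assms unfolding lessThan_iff by blast
    then show "cnj (w k) * P k l * v l = cnj (cnj (v l) * P l k * w k)"
      by (simp add: mult.commute mult.left_commute)
  qed
  also have "\<dots> = cnj (sesq d P v w)" by (simp add: sesq_def)
  finally show ?thesis .
qed

lemma sesq_unit_left: assumes "p < d" shows "sesq d P (unit_vec p) w = (\<Sum>l<d. P p l * w l)"
proof -
  have "sesq d P (unit_vec p) w = (\<Sum>k<d. cnj (unit_vec p k) * (\<Sum>l<d. P k l * w l))"
    by (simp add: sesq_def sum_distrib_left mult.assoc)
  also have "\<dots> = (\<Sum>k<d. if k = p then (\<Sum>l<d. P k l * w l) else 0)"
    by (intro sum.cong refl) (simp add: unit_vec_def)
  also have "\<dots> = (\<Sum>l<d. P p l * w l)" using assms by simp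
  finally show ?thesis .
qed
lemma sesq_unit_right: "p < d \<Longrightarrow> sesq d P w (unit_vec p) = (\<Sum>k<d. cnj (w k) * P k p)"
  by (simp add: sesq_def unit_vec_def if_distrib[of "\<lambda>x. _ * x"] cong: if_cong)

lemma sesq_unit_unit: "p < d \<Longrightarrow> sesq d P (unit_vec p) (unit_vec p) = P p p"
  by (simp add: sesq_unit_left) (simp add: unit_vec_def if_distrib[of "\<lambda>x. _ * x"] cong: if_cong)

lemma sesq_expand: "sesq d P (\<lambda>k. v k + c * w k) (\<lambda>k. v k + c * w k) =
   sesq d P v v + c * sesq d P v w + cnj c * sesq d P w v + cnj c * c * sesq d P w w"
  by (simp add: sesq_add_left sesq_add_right sesq_scale_left sesq_scale_right algebra_simps)

lemma herm_psd_diag: assumes "herm_psd d P" "p < d" shows "Im (P p p) = 0" "0 \<le> Re (P p p)"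
proof -
  have "sesq d P (unit_vec p) (unit_vec p) = P p p" using assms(2) by (rule sesq_unit_unit)
  then show "Im (P p p) = 0" "0 \<le> Re (P p p)" using assms(1) unfolding herm_psd_iff_sesq by metis+
qed

lemma quadratic_nonneg_linear_coeff_0:
  fixes a q :: real
  assumes "\<And>t. 0 \<le> 2 * t * a + t * t * q" "0 \<le> q"
  shows "a = 0"
proof (rule ccontr)
  assume "a \<noteq> 0"
  define t where "t = - a / (q + 1)"
  have q1: "q + 1 > 0" using assms(2) by linarith
  have ht: "(q+1)*t = -a" using q1 by (simp add: t_def)
  have "(q+1)*(q+1)*(2*t*a + t*t*q) = 2*(q+1)*((q+1)*t)*a + ((q+1)*t)*((q+1)*t)*q" by algebra
  also have "\<dots> = - (a*a*(q+2))" unfolding ht by algebra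
  finally have e: "(q+1)*(q+1)*(2*t*a + t*t*q) = - (a*a*(q+2))" .
  have "a * a > 0" using \<open>a \<noteq> 0\<close> by (simp add: zero_less_mult_iff) linarith
  moreover have "q + 2 > 0" using assms(2) by linarith
  ultimately have "a * a * (q + 2) > 0" by simp
  moreover have "(q+1)*(q+1)*(2*t*a + t*t*q) \<ge> 0" using assms(1)[of t] q1 by simp
  ultimately show False using e by linarith
qed

lemma herm_psd_sesq_null:
  assumes P: "herm_psd d P" and z: "sesq d P v v = 0"
  shows "sesq d P w v = 0"
proof -
  have H: "\<forall>k<d. \<forall>l<d. P k l = cnj (P l k)" using P unfolding herm_psd_iff_sesq by blast
  have pos: "\<And>u. Im (sesq d P u u) = 0 \<and> 0 \<le> Re (sesq d P u u)" using P unfolding herm_psd_iff_sesq by blast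
  have gen: "Re (sesq d P u v) = 0" for u
  proof (rule quadratic_nonneg_linear_coeff_0)
    show "0 \<le> Re (sesq d P u u)" using pos by blast
    fix t :: real
    have "sesq d P (\<lambda>k. v k + of_real t * u k) (\<lambda>k. v k + of_real t * u k)
        = of_real t * sesq d P v u + of_real t * sesq d P u v + of_real t * of_real t * sesq d P u u"
      using z by (simp add: sesq_expand)
    also have "sesq d P v u = cnj (sesq d P u v)" using sesq_hermitian[OF H] by blast
    finally have e: "sesq d P (\<lambda>k. v k + of_real t * u k) (\<lambda>k. v k + of_real t * u k)
        = of_real t * cnj (sesq d P u v) + of_real t * sesq d P u v + of_real t * of_real t * sesq d P u u" .
    have "0 \<le> Re (sesq d P (\<lambda>k. v k + of_real t * u k) (\<lambda>k. v k + of_real t * u k))" using pos by blast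
    also have "Re (sesq d P (\<lambda>k. v k + of_real t * u k) (\<lambda>k. v k + of_real t * u k)) = 2 * t * Re (sesq d P u v) + t * t * Re (sesq d P u u)"
      unfolding e by simp
    finally show "0 \<le> 2 * t * Re (sesq d P u v) + t * t * Re (sesq d P u u)" .
  qed
  have "Re (sesq d P (\<lambda>k. \<i> * w k) v) = 0" by (rule gen)
  then have "Im (sesq d P w v) = 0" by (simp add: sesq_scale_left)
  moreover have "Re (sesq d P w v) = 0" by (rule gen)
  ultimately show ?thesis by (simp add: complex_eq_iff)
qed

lemma herm_psd_null_vec:
  assumes P: "herm_psd d P" and z: "sesq d P v v = 0" and k: "k < d"
  shows "(\<Sum>l<d. P k l * v l) = 0"
  using herm_psd_sesq_null[OF P z, of "unit_vec k"] k by (simp add: sesq_unit_left)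

lemma herm_psd_entry_cnj:
  "herm_psd d B \<Longrightarrow> k < d \<Longrightarrow> l < d \<Longrightarrow> B k l = cnj (B l k)"
  unfolding herm_psd_def by blast

lemma herm_psd_sesq_nonneg: "herm_psd d B \<Longrightarrow> Im (sesq d B v v) = 0 \<and> 0 \<le> Re (sesq d B v v)"
  unfolding herm_psd_iff_sesq by blast

lemma sesq_diff_mat: "sesq d (\<lambda>k l. B k l - E k l) v w = sesq d B v w - sesq d E v w"
  by (simp add: sesq_def algebra_simps sum_subtractf)

lemma sesq_outer: "sesq d (\<lambda>k l. x k * cnj (x l)) v v =
   cnj (\<Sum>l<d. cnj (x l) * v l) * (\<Sum>l<d. cnj (x l) * v l)"
proof -
  have "sesq d (\<lambda>k l. x k * cnj (x l)) v v = (\<Sum>k<d. \<Sum>l<d. (cnj (v k) * x k) * (cnj (x l) * v l))"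
    by (simp add: sesq_def mult.assoc)
  also have "\<dots> = (\<Sum>k<d. cnj (v k) * x k) * (\<Sum>l<d. cnj (x l) * v l)"
    by (simp add: sum_product)
  also have "(\<Sum>k<d. cnj (v k) * x k) = cnj (\<Sum>l<d. cnj (x l) * v l)"
    by (simp add: mult.commute)
  finally show ?thesis .
qed

text \<open>Schur complement step: subtracting the rank-one matrix \<open>b b\<^sup>*\<close> built from column \<open>p\<close> keeps
  the form nonnegative, since the new form at \<open>v\<close> is the old one at \<open>v - (a / r) e\<^sub>p\<close>.\<close>
lemma herm_psd_schur_complement:
  assumes B: "herm_psd d B" and p: "p < d" and r: "r > 0" "B p p = of_real (r * r)"
    and b: "\<And>k. B k p = of_real r * b k"
  shows "herm_psd d (\<lambda>k l. B k l - b k * cnj (b l))"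
  unfolding herm_psd_iff_sesq
proof (intro conjI allI impI)
  fix k l assume "k < d" "l < d"
  then show "B k l - b k * cnj (b l) = cnj (B l k - b l * cnj (b k))"
    using herm_psd_entry_cnj[OF B, of k l] by (simp add: mult.commute)
next
  fix v
  define a where "a = (\<Sum>l<d. cnj (b l) * v l)"
  define c where "c = - a / of_real r"
  have "sesq d B v (unit_vec p) = of_real r * cnj a"
    using p by (simp add: sesq_unit_right a_def b sum_distrib_left mult_ac)
  moreover have "sesq d B (unit_vec p) v = of_real r * a"
    using p herm_psd_entry_cnj[OF B p] b
    by (simp add: sesq_unit_left a_def sum_distrib_left mult_ac)
  moreover have "sesq d B (unit_vec p) (unit_vec p) = of_real (r * r)"
    using p r(2) by (simp add: sesq_unit_unit)
  ultimately have "sesq d B (\<lambda>k. v k + c * unit_vec p k) (\<lambda>k. v k + c * unit_vec p k)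
      = sesq d B v v + c * (of_real r * cnj a) + cnj c * (of_real r * a) + cnj c * c * of_real (r * r)"
    by (simp only: sesq_expand)
  also have "\<dots> = sesq d B v v - cnj a * a"
    using r(1) by (simp add: c_def field_simps)
  also have "\<dots> = sesq d (\<lambda>k l. B k l - b k * cnj (b l)) v v"
    unfolding sesq_diff_mat sesq_outer a_def ..
  finally show "Im (sesq d (\<lambda>k l. B k l - b k * cnj (b l)) v v) = 0"
    and "0 \<le> Re (sesq d (\<lambda>k l. B k l - b k * cnj (b l)) v v)"
    using herm_psd_sesq_nonneg[OF B] by metis+
qed

lemma herm_psd_rank_one_reduction:
  assumes B: "herm_psd d B" and p: "p < d"
  obtains b where "herm_psd d (\<lambda>k l. B k l - b k * cnj (b l))"
    and "\<And>l. l < d \<Longrightarrow> B p l = b p * cnj (b l)"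
    and "\<And>k. B k p = 0 \<Longrightarrow> b k = 0"
proof (cases "Re (B p p) = 0")
  case True
  then have "B p p = 0" using herm_psd_diag[OF B p] by (simp add: complex_eq_iff)
  then have "sesq d B (unit_vec p) (unit_vec p) = 0"
    using p by (simp add: sesq_unit_unit)
  then have col: "B k p = 0" if "k < d" for k
    using herm_psd_null_vec[OF B _ that, of "unit_vec p"] p
    by (simp add: unit_vec_def if_distrib[of "\<lambda>x. _ * x"] cong: if_cong)
  have "B p l = 0" if "l < d" for l
    using herm_psd_entry_cnj[OF B p that] col[OF that] by simp
  with B show thesis by (intro that[of "\<lambda>_. 0"]) simp_all
next
  case False
  define r where "r = sqrt (Re (B p p))"
  have r: "r > 0" using False herm_psd_diag(2)[OF B p] by (simp add: r_def)
  have Bpp: "B p p = of_real (r * r)"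
    using herm_psd_diag[OF B p] False by (simp add: r_def complex_eq_iff)
  define b where "b k = B k p / of_real r" for k
  have Bkp: "B k p = of_real r * b k" for k using r by (simp add: b_def)
  have "b p = of_real r" using Bpp r by (simp add: b_def)
  then have "B p l = b p * cnj (b l)" if "l < d" for l
    using herm_psd_entry_cnj[OF B p that] Bkp[of l] by simp
  moreover have "b k = 0" if "B k p = 0" for k using that by (simp add: b_def)
  ultimately show thesis using herm_psd_schur_complement[OF B p r Bpp Bkp] that by blast
qed

lemma cholesky_from:
  assumes "herm_psd d B" "p \<le> d"
    and "\<And>k l. k < d \<Longrightarrow> l < d \<Longrightarrow> k < p \<or> l < p \<Longrightarrow> B k l = 0"
  shows "\<exists>b. \<forall>k<d. \<forall>l<d. B k l = (\<Sum>j\<in>{p..<d}. b j k * cnj (b j l))"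
  using assms
proof (induction "d - p" arbitrary: p B)
  case 0
  then show ?case by auto
next
  case (Suc n)
  have p: "p < d" using Suc.hyps by simp
  obtain b where B': "herm_psd d (\<lambda>k l. B k l - b k * cnj (b l))"
    and row: "\<And>l. l < d \<Longrightarrow> B p l = b p * cnj (b l)" and b0: "\<And>k. B k p = 0 \<Longrightarrow> b k = 0"
    using herm_psd_rank_one_reduction[OF Suc.prems(1) p] by blast
  have zero: "B k l - b k * cnj (b l) = 0" if "k < d" "l < d" "k < Suc p \<or> l < Suc p" for k l
  proof -
    have "B k l - b k * cnj (b l) = cnj (B l k - b l * cnj (b k))"
      using herm_psd_entry_cnj[OF B'] that(1,2) by blast
    moreover have "B q m - b q * cnj (b m) = 0" if "q < d" "m < d" "q \<le> p" for q m
    proof (cases "q = p")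
      case True
      then show ?thesis using row[OF that(2)] by simp
    next
      case False
      then have "q < p" using that(3) by simp
      then have "B q m = 0" "b q = 0" using Suc.prems(3) b0 that(1,2) p by auto
      then show ?thesis by simp
    qed
    ultimately show ?thesis using that by (auto simp: less_Suc_eq_le)
  qed
  have "\<exists>c. \<forall>k<d. \<forall>l<d. B k l - b k * cnj (b l) = (\<Sum>j\<in>{Suc p..<d}. c j k * cnj (c j l))"
    by (rule Suc.hyps(1)[of "Suc p"]) (use Suc.hyps(2) B' zero p in auto)
  then obtain c where c: "\<forall>k<d. \<forall>l<d. B k l - b k * cnj (b l) = (\<Sum>j\<in>{Suc p..<d}. c j k * cnj (c j l))"
    by blast
  have ivl: "{p..<d} = insert p {Suc p..<d}" using p by auto
  have "B k l = (\<Sum>j\<in>{p..<d}. (c(p := b)) j k * cnj ((c(p := b)) j l))" if "k < d" "l < d" for k l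
  proof -
    have "(\<Sum>j\<in>{Suc p..<d}. (c(p := b)) j k * cnj ((c(p := b)) j l)) = (\<Sum>j\<in>{Suc p..<d}. c j k * cnj (c j l))"
      by (intro sum.cong refl) simp
    moreover have "B k l - b k * cnj (b l) = (\<Sum>j\<in>{Suc p..<d}. c j k * cnj (c j l))"
      using c that by blast
    ultimately show ?thesis unfolding ivl by (simp add: diff_eq_eq)
  qed
  then show ?case by blast
qed

lemma cholesky:
  assumes "herm_psd d B"
  shows "\<exists>b. \<forall>k<d. \<forall>l<d. B k l = (\<Sum>j<d. b j k * cnj (b j l))"
  using cholesky_from[OF assms, of 0] by (simp add: atLeast0LessThan)

lemma mat_tr_mult_factored:
  assumes "\<forall>k<d. \<forall>l<d. B k l = (\<Sum>j<d. b j k * cnj (b j l))"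
  shows "mat_tr d (mat_mult d A B) = (\<Sum>j<d. sesq d A (b j) (b j))"
proof -
  have "mat_tr d (mat_mult d A B) = (\<Sum>k<d. \<Sum>l<d. \<Sum>j<d. cnj (b j k) * A k l * b j l)"
    using assms by (simp add: mat_tr_def mat_mult_in sum_distrib_left mult.commute mult.left_commute)
  also have "\<dots> = (\<Sum>k<d. \<Sum>j<d. \<Sum>l<d. cnj (b j k) * A k l * b j l)"
    by (rule sum.cong[OF refl], rule sum.swap)
  also have "\<dots> = (\<Sum>j<d. sesq d A (b j) (b j))"
    by (subst sum.swap) (simp add: sesq_def)
  finally show ?thesis .
qed

lemma herm_psd_tr_mult_0:
  assumes A: "herm_psd d A" and B: "herm_psd d B" and t: "mat_tr d (mat_mult d A B) = 0"
  shows "mat_mult d A B = 0"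
proof -
  obtain b where b: "\<forall>k<d. \<forall>l<d. B k l = (\<Sum>j<d. b j k * cnj (b j l))"
    using cholesky[OF B] by blast
  have "(\<Sum>j<d. Re (sesq d A (b j) (b j))) = 0"
    using arg_cong[OF t, of Re] by (simp add: mat_tr_mult_factored[OF b] Re_sum)
  then have "\<forall>j\<in>{..<d}. Re (sesq d A (b j) (b j)) = 0"
    by (subst (asm) sum_nonneg_eq_0_iff) (auto simp: herm_psd_sesq_nonneg[OF A])
  then have z: "sesq d A (b j) (b j) = 0" if "j < d" for j
    using that herm_psd_sesq_nonneg[OF A, of "b j"] by (simp add: complex_eq_iff)
  have zv: "(\<Sum>l<d. A k l * b j l) = 0" if "j < d" "k < d" for j k
    using herm_psd_null_vec[OF A z[OF that(1)] that(2)] .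
  show ?thesis
  proof (rule mat_dim_eqI[OF mat_dim_mult mat_dim_zero])
    fix k m assume km: "k < d" "m < d"
    have "mat_mult d A B k m = (\<Sum>l<d. A k l * (\<Sum>j<d. b j l * cnj (b j m)))"
      using km b by (simp add: mat_mult_in)
    also have "\<dots> = (\<Sum>l<d. \<Sum>j<d. A k l * b j l * cnj (b j m))"
      by (simp add: sum_distrib_left mult.assoc)
    also have "\<dots> = (\<Sum>j<d. \<Sum>l<d. A k l * b j l * cnj (b j m))" by (rule sum.swap)
    also have "\<dots> = (\<Sum>j<d. (\<Sum>l<d. A k l * b j l) * cnj (b j m))"
      by (simp add: sum_distrib_right)
    also have "\<dots> = 0" using zv km by simp
    finally show "mat_mult d A B k m = 0 k m" by simp
  qed
qed

lemma herm_psd_gram: "herm_psd d (mat_mult d (mat_adj N) N)"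
  unfolding herm_psd_iff_sesq
proof (intro conjI allI impI)
  fix k l assume "k < d" "l < d"
  then show "mat_mult d (mat_adj N) N k l = cnj (mat_mult d (mat_adj N) N l k)"
    by (simp add: mat_mult_in mat_adj_def mult.commute)
next
  fix v
  have "sesq d (mat_mult d (mat_adj N) N) v v = (\<Sum>k<d. \<Sum>l<d. cnj (v k) * (\<Sum>j<d. cnj (N j k) * N j l) * v l)"
    by (simp add: sesq_def mat_mult_in mat_adj_def)
  also have "\<dots> = (\<Sum>k<d. \<Sum>l<d. \<Sum>j<d. cnj (N j k * v k) * (N j l * v l))"
    by (simp add: sum_distrib_left sum_distrib_right mult.commute mult.left_commute)
  also have "\<dots> = (\<Sum>k<d. \<Sum>j<d. \<Sum>l<d. cnj (N j k * v k) * (N j l * v l))"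
    by (rule sum.cong[OF refl], rule sum.swap)
  also have "\<dots> = (\<Sum>j<d. \<Sum>k<d. \<Sum>l<d. cnj (N j k * v k) * (N j l * v l))"
    by (rule sum.swap)
  also have "\<dots> = (\<Sum>j<d. cnj (\<Sum>k<d. N j k * v k) * (\<Sum>l<d. N j l * v l))"
    by (simp add: sum_product)
  also have "\<dots> = (\<Sum>j<d. of_real ((cmod (\<Sum>l<d. N j l * v l))\<^sup>2))"
  proof -
    have cz: "cnj z * z = of_real ((cmod z)\<^sup>2)" for z :: complex
      by (simp only: complex_norm_square mult.commute)
    show ?thesis by (simp only: cz)
  qed
  finally have e: "sesq d (mat_mult d (mat_adj N) N) v v = of_real (\<Sum>j<d. (cmod (\<Sum>l<d. N j l * v l))\<^sup>2)"
    by simp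
  show "Im (sesq d (mat_mult d (mat_adj N) N) v v) = 0" unfolding e by simp
  show "0 \<le> Re (sesq d (mat_mult d (mat_adj N) N) v v)" unfolding e by (simp add: sum_nonneg)
qed

lemma herm_psd_scale: assumes "herm_psd d P" "0 \<le> r" shows "herm_psd d (mat_scale (of_real r) P)"
  unfolding herm_psd_iff_sesq
proof (intro conjI allI impI)
  fix k l assume "k < d" "l < d"
  then show "mat_scale (of_real r) P k l = cnj (mat_scale (of_real r) P l k)"
    using herm_psd_entry_cnj[OF assms(1), of k l] by (simp add: mat_scale_def)
next
  fix v
  have e: "sesq d (mat_scale (of_real r) P) v v = of_real r * sesq d P v v"
    by (simp add: sesq_def mat_scale_def sum_distrib_left mult.commute mult.left_commute)
  show "Im (sesq d (mat_scale (of_real r) P) v v) = 0" unfolding e using herm_psd_sesq_nonneg[OF assms(1)] by simp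
  show "0 \<le> Re (sesq d (mat_scale (of_real r) P) v v)" unfolding e using herm_psd_sesq_nonneg[OF assms(1), of v] assms(2) by simp
qed

lemma sesq_trunc: "sesq d (mat_trunc d P) v w = sesq d P v w"
  by (simp add: sesq_def mat_trunc_def)

lemma herm_psd_trunc: "herm_psd d (mat_trunc d P) \<longleftrightarrow> herm_psd d P"
  unfolding herm_psd_iff_sesq sesq_trunc by (simp add: mat_trunc_def)

lemma hermitian_trunc: "herm_psd d P \<Longrightarrow> hermitian (mat_trunc d P)"
  unfolding hermitian_def
proof (intro ext)
  fix k l assume P: "herm_psd d P"
  show "mat_adj (mat_trunc d P) k l = mat_trunc d P k l"
  proof (cases "k < d \<and> l < d")
    case True then show ?thesis using herm_psd_entry_cnj[OF P, of k l] by (simp add: mat_adj_def mat_trunc_def)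
  next
    case False then show ?thesis by (auto simp: mat_adj_def mat_trunc_def)
  qed
qed

lemma tr_prod_trunc: "tr_prod d (mat_trunc d P) (mat_trunc d Q) = tr_prod d P Q"
  by (simp add: tr_prod_def mat_trunc_def)

lemma sum_sum_delta:
  assumes "finite I"
  shows "(\<Sum>k\<in>I. \<Sum>l\<in>I. a k * b l * (if k = l then 1 else 0)) = (\<Sum>k\<in>I. a k * (b k :: 'a::comm_semiring_1))"
proof -
  have "(\<Sum>l\<in>I. a k * b l * (if k = l then 1 else 0)) = (if k \<in> I then a k * b k else 0)" for k
    using assms by (simp add: if_distrib[of "\<lambda>t. _ * t"] cong: if_cong)
  then show ?thesis by (simp cong: sum.cong)
qed

lemma mat_mult_lincomb:
  "mat_mult d (\<Sum>i\<in>I. mat_scale (a i) (G i)) (\<Sum>j\<in>I. mat_scale (b j) (G j)) = (\<Sum>i\<in>I. \<Sum>j\<in>I. mat_scale (a i * b j) (mat_mult d (G i) (G j)))"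
proof -
  have "mat_mult d (\<Sum>i\<in>I. mat_scale (a i) (G i)) (\<Sum>j\<in>I. mat_scale (b j) (G j)) = (\<Sum>i\<in>I. mat_mult d (mat_scale (a i) (G i)) (\<Sum>j\<in>I. mat_scale (b j) (G j)))"
    by (rule mat_mult_sum_left)
  also have "\<dots> = (\<Sum>i\<in>I. \<Sum>j\<in>I. mat_mult d (mat_scale (a i) (G i)) (mat_scale (b j) (G j)))"
    by (simp only: mat_mult_sum_right)
  also have "\<dots> = (\<Sum>i\<in>I. \<Sum>j\<in>I. mat_scale (a i * b j) (mat_mult d (G i) (G j)))"
    by (simp only: mat_mult_scale_left mat_mult_scale_right mat_scale_scale mult.commute)
  finally show ?thesis .
qed

lemma anticomm_lincomb:
  assumes G: "\<And>i j. i \<in> I \<Longrightarrow> j \<in> I \<Longrightarrow> mat_mult d (G i) (G j) + mat_mult d (G j) (G i) = mat_scale (2 * M i j) R"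
  shows "mat_mult d (\<Sum>i\<in>I. mat_scale (a i) (G i)) (\<Sum>j\<in>I. mat_scale (b j) (G j)) + mat_mult d (\<Sum>j\<in>I. mat_scale (b j) (G j)) (\<Sum>i\<in>I. mat_scale (a i) (G i))
     = mat_scale (2 * (\<Sum>i\<in>I. \<Sum>j\<in>I. a i * b j * M i j)) R"
proof -
  have sw: "(\<Sum>i\<in>I. \<Sum>j\<in>I. mat_scale (b i * a j) (mat_mult d (G i) (G j))) = (\<Sum>i\<in>I. \<Sum>j\<in>I. mat_scale (a i * b j) (mat_mult d (G j) (G i)))"
    by (subst sum.swap) (simp add: mult.commute)
  have "mat_mult d (\<Sum>i\<in>I. mat_scale (a i) (G i)) (\<Sum>j\<in>I. mat_scale (b j) (G j)) + mat_mult d (\<Sum>j\<in>I. mat_scale (b j) (G j)) (\<Sum>i\<in>I. mat_scale (a i) (G i))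
      = (\<Sum>i\<in>I. \<Sum>j\<in>I. mat_scale (a i * b j) (mat_mult d (G i) (G j))) + (\<Sum>i\<in>I. \<Sum>j\<in>I. mat_scale (a i * b j) (mat_mult d (G j) (G i)))"
    unfolding mat_mult_lincomb sw ..
  also have "\<dots> = (\<Sum>i\<in>I. \<Sum>j\<in>I. mat_scale (a i * b j) (mat_mult d (G i) (G j) + mat_mult d (G j) (G i)))"
    by (simp add: sum.distrib[symmetric] mat_scale_add)
  also have "\<dots> = (\<Sum>i\<in>I. \<Sum>j\<in>I. mat_scale (a i * b j * (2 * M i j)) R)"
    by (intro sum.cong refl) (simp add: G mat_scale_scale)
  also have "\<dots> = mat_scale (2 * (\<Sum>i\<in>I. \<Sum>j\<in>I. a i * b j * M i j)) R"
    by (simp add: sum_mat_scale sum_distrib_left mult.commute mult.left_commute)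
  finally show ?thesis .
qed

section \<open>Jordan--Wigner matrices\<close>

text \<open>On vectors indexed by bit strings \<open>p < 2^s\<close>, \<open>jw_gamma s k\<close> flips bit \<open>k\<close> of \<open>p\<close> with sign
  \<open>(-1)^#{j < k. bit p j}\<close> (the Jordan--Wigner construction).\<close>

definition jw_sign :: "nat \<Rightarrow> nat \<Rightarrow> complex" where
  "jw_sign p k = (-1) ^ card {j. j < k \<and> bit p j}"

definition jw_gamma :: "nat \<Rightarrow> nat \<Rightarrow> cmat" where
  "jw_gamma s k = (\<lambda>p q. if p < 2^s \<and> q < 2^s \<and> q = flip_bit k p then jw_sign p k else 0)"

lemma flip_bit_flip_bit[simp]: "flip_bit k (flip_bit k p) = (p::nat)"
  by (rule bit_eqI) (auto simp: bit_flip_bit_iff)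

lemma flip_bit_neq: "flip_bit k p \<noteq> (p::nat)"
proof
  assume h: "flip_bit k p = p"
  have "bit (flip_bit k p) k = (\<not> bit p k)" by (simp add: bit_flip_bit_iff)
  then show False using h by simp
qed

lemma flip_bit_commute: "flip_bit i (flip_bit j p) = flip_bit j (flip_bit i (p::nat))"
  by (rule bit_eqI) (auto simp: bit_flip_bit_iff)

lemma flip_bit_less_two_pow: assumes "k < s" "p < 2^s" shows "flip_bit k p < (2::nat)^s"
proof -
  have "take_bit s p = p" using assms(2) by (simp add: take_bit_nat_eq_self_iff)
  then have "take_bit s (flip_bit k p) = flip_bit k p"
    using assms(1) by (simp add: take_bit_flip_bit_eq)
  then show ?thesis by (simp add: take_bit_nat_eq_self_iff)
qed

lemma bit_flip_bit_other: "j \<noteq> i \<Longrightarrow> bit (flip_bit i (p::nat)) j = bit p j"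
  by (auto simp: bit_flip_bit_iff)

lemma jw_sign_sq: "jw_sign p k * jw_sign p k = 1"
  by (simp add: jw_sign_def power_mult_distrib[symmetric])

lemma jw_sign_flip_same: "jw_sign (flip_bit k p) k = jw_sign p k"
proof -
  have "{j. j < k \<and> bit (flip_bit k p) j} = {j. j < k \<and> bit p j}"
    by (auto simp: bit_flip_bit_other)
  then show ?thesis by (simp add: jw_sign_def)
qed

lemma jw_sign_flip_above: assumes "j < i" shows "jw_sign (flip_bit i p) j = jw_sign p j"
proof -
  have "{l. l < j \<and> bit (flip_bit i p) l} = {l. l < j \<and> bit p l}"
    using assms by (auto simp: bit_flip_bit_other)
  then show ?thesis by (simp add: jw_sign_def)
qed

lemma jw_sign_flip_below: assumes "i < j" shows "jw_sign (flip_bit i p) j = - jw_sign p j"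
proof -
  let ?S = "{l. l < j \<and> bit p l}"
  let ?T = "{l. l < j \<and> bit (flip_bit i p) l}"
  have fin: "finite ?S" "finite ?T" by auto
  show ?thesis
  proof (cases "bit p i")
    case True
    then have "?S = insert i ?T" "i \<notin> ?T" using assms by (auto simp: bit_flip_bit_iff)
    then have "card ?S = Suc (card ?T)" using fin by simp
    then show ?thesis by (simp add: jw_sign_def)
  next
    case False
    then have "?T = insert i ?S" "i \<notin> ?S" using assms by (auto simp: bit_flip_bit_iff)
    then have "card ?T = Suc (card ?S)" using fin by simp
    then show ?thesis by (simp add: jw_sign_def)
  qed
qed

lemma jw_sign_real: "cnj (jw_sign p k) = jw_sign p k"
  by (simp add: jw_sign_def)

lemma mat_dim_jw_gamma[simp]: "mat_dim (2^s) (jw_gamma s k)"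
  unfolding mat_dim_def jw_gamma_def by auto

lemma jw_gamma_mult:
  assumes "i < s" "j < s" "p < 2^s" "r < 2^s"
  shows "mat_mult (2^s) (jw_gamma s i) (jw_gamma s j) p r = (if r = flip_bit j (flip_bit i p) then jw_sign p i * jw_sign (flip_bit i p) j else 0)"
proof -
  have fi: "flip_bit i p < 2^s" using flip_bit_less_two_pow assms by blast
  have "mat_mult (2^s) (jw_gamma s i) (jw_gamma s j) p r = (\<Sum>q<2^s. jw_gamma s i p q * jw_gamma s j q r)"
    using assms by (simp add: mat_mult_in)
  also have "\<dots> = (\<Sum>q<2^s. if q = flip_bit i p then jw_sign p i * jw_gamma s j q r else 0)"
    by (intro sum.cong refl) (auto simp: jw_gamma_def assms)
  also have "\<dots> = jw_sign p i * jw_gamma s j (flip_bit i p) r" using fi by simp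
  also have "\<dots> = (if r = flip_bit j (flip_bit i p) then jw_sign p i * jw_sign (flip_bit i p) j else 0)"
    using fi assms by (simp add: jw_gamma_def)
  finally show ?thesis .
qed

lemma eq_flip_bit_iff: "(p = flip_bit k q) = (q = flip_bit k (p::nat))"
  by (metis flip_bit_flip_bit)

lemma jw_gamma_anticomm:
  assumes "i < s" "j < s"
  shows "mat_mult (2^s) (jw_gamma s i) (jw_gamma s j) + mat_mult (2^s) (jw_gamma s j) (jw_gamma s i) = mat_scale (2 * (if i = j then 1 else 0)) (mat_id (2^s))"
proof (rule mat_dim_eqI[of "2^s"])
  show "mat_dim (2^s) (mat_mult (2^s) (jw_gamma s i) (jw_gamma s j) + mat_mult (2^s) (jw_gamma s j) (jw_gamma s i))" by simp
  show "mat_dim (2^s) (mat_scale (2 * (if i = j then 1 else 0)) (mat_id (2^s)))" by simp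
  fix p r :: nat assume pr: "p < 2^s" "r < 2^s"
  show "(mat_mult (2^s) (jw_gamma s i) (jw_gamma s j) + mat_mult (2^s) (jw_gamma s j) (jw_gamma s i)) p r = mat_scale (2 * (if i = j then 1 else 0)) (mat_id (2^s)) p r"
  proof (cases "i = j")
    case True
    have "mat_mult (2^s) (jw_gamma s i) (jw_gamma s i) p r = (if r = p then 1 else 0)"
      using assms pr by (simp add: jw_gamma_mult jw_sign_flip_same jw_sign_sq)
    then show ?thesis using True pr by (simp add: mat_scale_def mat_id_def)
  next
    case False
    have sgn: "jw_sign p i * jw_sign (flip_bit i p) j + jw_sign p j * jw_sign (flip_bit j p) i = 0"
    proof (cases "i < j")
      case True then show ?thesis by (simp add: jw_sign_flip_below jw_sign_flip_above)
    next
      case False then have "j < i" using \<open>i \<noteq> j\<close> by simp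
      then show ?thesis by (simp add: jw_sign_flip_below jw_sign_flip_above)
    qed
    have e1: "mat_mult (2^s) (jw_gamma s i) (jw_gamma s j) p r = (if r = flip_bit j (flip_bit i p) then jw_sign p i * jw_sign (flip_bit i p) j else 0)"
      using assms pr by (rule jw_gamma_mult)
    have e2: "mat_mult (2^s) (jw_gamma s j) (jw_gamma s i) p r = (if r = flip_bit j (flip_bit i p) then jw_sign p j * jw_sign (flip_bit j p) i else 0)"
      using jw_gamma_mult[of j s i p r] assms pr flip_bit_commute[of i j p] by simp
    have "(mat_mult (2^s) (jw_gamma s i) (jw_gamma s j) + mat_mult (2^s) (jw_gamma s j) (jw_gamma s i)) p r = 0"
      unfolding plus_fun_apply e1 e2 using sgn by simp
    then show ?thesis using False by (simp add: mat_scale_def)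
  qed
qed

lemma hermitian_jw_gamma: "hermitian (jw_gamma s k)"
  unfolding hermitian_def
proof (intro ext)
  fix p q
  show "mat_adj (jw_gamma s k) p q = jw_gamma s k p q"
  proof (cases "p < 2^s \<and> q < 2^s \<and> q = flip_bit k p")
    case True
    then have "p = flip_bit k q" by simp
    then show ?thesis using True by (simp add: mat_adj_def jw_gamma_def jw_sign_real jw_sign_flip_same)
  next
    case False
    then have "\<not> (q < 2^s \<and> p < 2^s \<and> p = flip_bit k q)" using eq_flip_bit_iff by blast
    then have "jw_gamma s k q p = 0" unfolding jw_gamma_def by meson
    moreover have "jw_gamma s k p q = 0" using False unfolding jw_gamma_def by meson
    ultimately show ?thesis by (simp add: mat_adj_def)
  qed
qed

lemma mat_tr_jw_gamma: "mat_tr (2^s) (jw_gamma s k) = 0"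
  unfolding mat_tr_def jw_gamma_def using flip_bit_neq by (simp add: eq_commute[of _ "flip_bit _ _"])

section \<open>Gram representations of real positive semidefinite matrices\<close>

lemma span_range_sum_repr:
  fixes u :: "'n::finite \<Rightarrow> 'b::real_vector"
  assumes "x \<in> span (range u)"
  shows "\<exists>c. x = (\<Sum>i\<in>UNIV. c i *\<^sub>R u i)"
  using assms
proof (induction rule: span_induct_alt)
  case base
  then show ?case by (intro exI[of _ "\<lambda>_. 0"]) simp
next
  case (step c x y)
  then obtain c' where c': "y = (\<Sum>i\<in>UNIV. c' i *\<^sub>R u i)" by blast
  from step obtain j where j: "x = u j" by blast
  show ?case
    by (intro exI[of _ "\<lambda>i. c' i + (if i = j then c else 0)"])
       (simp add: c' j scaleR_add_left sum.distrib if_distrib[of "\<lambda>t. t *\<^sub>R _"] cong: if_cong)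
qed

lemma orthonormal_basis_enum:
  fixes W :: "'a::euclidean_space set"
  assumes "subspace W"
  obtains e where "\<And>k. k < dim W \<Longrightarrow> e k \<in> W"
    and "\<And>k l. k < dim W \<Longrightarrow> l < dim W \<Longrightarrow> e k \<bullet> e l = (if k = l then 1 else 0)"
    and "\<And>x. x \<in> W \<Longrightarrow> x = (\<Sum>k<dim W. (x \<bullet> e k) *\<^sub>R e k)"
proof -
  obtain B where BW: "B \<subseteq> W" and orth: "pairwise orthogonal B"
    and n1: "\<And>x. x \<in> B \<Longrightarrow> norm x = 1" and ind: "independent B"
    and cB: "card B = dim W" and sB: "span B = W"
    using orthonormal_basis_subspace[OF assms] by blast
  have finB: "finite B" using ind by (rule independent_imp_finite)
  obtain e where e: "bij_betw e {..<dim W} B"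
    using ex_bij_betw_nat_finite[OF finB] cB by (auto simp: atLeast0LessThan)
  have eB: "e k \<in> B" if "k < dim W" for k using e that by (auto simp: bij_betw_def)
  show thesis
  proof
    show "e k \<in> W" if "k < dim W" for k using eB[OF that] BW by blast
    show "e k \<bullet> e l = (if k = l then 1 else 0)" if "k < dim W" "l < dim W" for k l
    proof (cases "k = l")
      case True
      then show ?thesis using n1[OF eB[OF that(1)]] by (simp add: norm_eq_1)
    next
      case False
      then have "e k \<noteq> e l" using e that by (auto simp: bij_betw_def inj_on_def)
      then show ?thesis using orth eB that False by (auto simp: pairwise_def orthogonal_def)
    qed
    show "x = (\<Sum>k<dim W. (x \<bullet> e k) *\<^sub>R e k)" if "x \<in> W" for x
      using orthonormal_basis_expand[OF orth n1 _ finB, of x] sB that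
        sum.reindex_bij_betw[OF e, of "\<lambda>b. (x \<bullet> b) *\<^sub>R b"] by simp
  qed
qed

definition gram_frame :: "real^'n^'n \<Rightarrow> nat \<Rightarrow> ('n \<Rightarrow> nat \<Rightarrow> real) \<Rightarrow> (nat \<Rightarrow> 'n \<Rightarrow> real) \<Rightarrow> bool" where
  "gram_frame C s \<alpha> c \<longleftrightarrow> (\<forall>i j. C $ i $ j = (\<Sum>k<s. \<alpha> i k * \<alpha> j k)) \<and>
     (\<forall>k<s. \<forall>l<s. (\<Sum>i\<in>UNIV. c k i * \<alpha> i l) = (if k = l then 1 else 0))"

lemma gram_frame_of_gram_vectors:
  fixes C :: "real^'n^'n" and u :: "'n \<Rightarrow> real^'m"
  assumes Cu: "\<And>i j. C $ i $ j = u i \<bullet> u j"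
  shows "\<exists>s \<alpha> c. gram_frame C s \<alpha> c \<and> rank C \<le> s"
proof -
  define s where "s = dim (span (range u))"
  obtain e where eW: "\<And>k. k < s \<Longrightarrow> e k \<in> span (range u)"
    and einner: "\<And>k l. k < s \<Longrightarrow> l < s \<Longrightarrow> e k \<bullet> e l = (if k = l then 1 else 0)"
    and expand: "\<And>x. x \<in> span (range u) \<Longrightarrow> x = (\<Sum>k<s. (x \<bullet> e k) *\<^sub>R e k)"
    using orthonormal_basis_enum[OF subspace_span, of "range u"] unfolding s_def by blast
  define \<alpha> where "\<alpha> i k = u i \<bullet> e k" for i k
  have g1: "C $ i $ j = (\<Sum>k<s. \<alpha> i k * \<alpha> j k)" for i j
  proof -
    have "C $ i $ j = (\<Sum>k<s. (u i \<bullet> e k) *\<^sub>R e k) \<bullet> u j"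
      using Cu expand[of "u i"] by (metis rangeI span_base)
    also have "\<dots> = (\<Sum>k<s. (u i \<bullet> e k) * (u j \<bullet> e k))"
      unfolding inner_sum_left inner_scaleR_left by (simp add: inner_commute)
    finally show ?thesis by (simp add: \<alpha>_def)
  qed
  obtain c where c: "\<And>k. k < s \<Longrightarrow> e k = (\<Sum>i\<in>UNIV. c k i *\<^sub>R u i)"
    using span_range_sum_repr[OF eW] by metis
  have g2: "(\<Sum>i\<in>UNIV. c k i * \<alpha> i l) = (if k = l then 1 else 0)" if "k < s" "l < s" for k l
  proof -
    have "(\<Sum>i\<in>UNIV. c k i * \<alpha> i l) = (\<Sum>i\<in>UNIV. c k i *\<^sub>R u i) \<bullet> e l"
      by (simp add: \<alpha>_def inner_sum_left)
    then show ?thesis using c[OF that(1)] einner[OF that] by simp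
  qed
  define U :: "real^'n^'m" where "U = (\<chi> q i. u i $ q)"
  have "C = transpose U ** U"
    by (simp add: vec_eq_iff matrix_matrix_mult_def transpose_def U_def Cu inner_vec_def)
  then have "rank C \<le> rank U" by (simp add: rank_mul_le_right)
  also have "rank U = s"
    by (simp add: column_rank_def s_def dim_span columns_def column_def U_def vec_eq_iff image_def)
  finally show ?thesis using g1 g2 unfolding gram_frame_def by blast
qed

lemma inner_mat_vec_sum: "x \<bullet> (C *v x) = (\<Sum>i\<in>UNIV. \<Sum>j\<in>UNIV. x $ i * C $ i $ j * x $ j)"
  for C :: "real^'n^'n"
  by (simp add: inner_vec_def matrix_vector_mult_def sum_distrib_left mult.assoc)

lemma psd_real_sym: "psd_real C \<Longrightarrow> C $ i $ j = C $ j $ i"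
  unfolding psd_real_def by (metis transpose_def vec_lambda_beta)

lemma herm_psd_of_psd_real:
  fixes C :: "real^'n^'n"
  assumes psd: "psd_real C" and h: "bij_betw h UNIV {..<N}"
  shows "herm_psd N (\<lambda>k l. if k < N \<and> l < N then of_real (C $ inv h k $ inv h l) else 0)"
    (is "herm_psd N ?B")
  unfolding herm_psd_iff_sesq
proof (intro conjI allI impI)
  fix k l assume "k < N" "l < N"
  then show "?B k l = cnj (?B l k)" using psd_real_sym[OF psd] by simp
next
  fix v
  have hinv: "inv h (h i) = i" for i using h by (simp add: bij_betw_def)
  have hlt: "h i < N" for i using h by (auto simp: bij_betw_def)
  define X where "X = (\<chi> i. Re (v (h i)))"
  define Y where "Y = (\<chi> i. Im (v (h i)))"
  have reindex: "(\<Sum>k<N. f k) = (\<Sum>i\<in>UNIV. f (h i))" for f :: "nat \<Rightarrow> complex"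
    using sum.reindex_bij_betw[OF h, of f] by simp
  have e: "sesq N ?B v v = (\<Sum>i\<in>UNIV. \<Sum>j\<in>UNIV. cnj (v (h i)) * complex_of_real (C $ i $ j) * v (h j))"
    by (simp add: sesq_def reindex hlt hinv)
  have "Re (sesq N ?B v v) = (\<Sum>i\<in>UNIV. \<Sum>j\<in>UNIV. X $ i * C $ i $ j * X $ j) + (\<Sum>i\<in>UNIV. \<Sum>j\<in>UNIV. Y $ i * C $ i $ j * Y $ j)"
    unfolding e by (simp add: Re_sum X_def Y_def sum.distrib[symmetric] algebra_simps)
  also have "\<dots> = X \<bullet> (C *v X) + Y \<bullet> (C *v Y)" by (simp add: inner_mat_vec_sum)
  finally show "0 \<le> Re (sesq N ?B v v)" using psd unfolding psd_real_def by (metis add_nonneg_nonneg)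
  have "Im (sesq N ?B v v) = (\<Sum>i\<in>UNIV. \<Sum>j\<in>UNIV. X $ i * C $ i $ j * Y $ j) - (\<Sum>i\<in>UNIV. \<Sum>j\<in>UNIV. Y $ i * C $ i $ j * X $ j)"
    unfolding e by (simp add: Im_sum X_def Y_def sum_subtractf[symmetric] algebra_simps)
  also have "(\<Sum>i\<in>UNIV. \<Sum>j\<in>UNIV. Y $ i * C $ i $ j * X $ j) = (\<Sum>i\<in>UNIV. \<Sum>j\<in>UNIV. X $ i * C $ i $ j * Y $ j)"
    by (subst sum.swap) (simp add: psd_real_sym[OF psd, of _ "_"] mult_ac)
  finally show "Im (sesq N ?B v v) = 0" by simp
qed

lemma psd_real_gram_vectors:
  fixes C :: "real^'n^'n"
  assumes psd: "psd_real C"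
  shows "\<exists>u :: 'n \<Rightarrow> real^('n \<times> bool). \<forall>i j. C $ i $ j = u i \<bullet> u j"
proof -
  obtain h :: "'n \<Rightarrow> nat" where h: "bij_betw h UNIV {..<CARD('n)}"
    using ex_bij_betw_finite_nat[of "UNIV::'n set"] by (auto simp: atLeast0LessThan)
  have hinv: "inv h (h i) = i" for i using h by (simp add: bij_betw_def)
  have hlt: "h i < CARD('n)" for i using h by (auto simp: bij_betw_def)
  obtain b where b: "\<And>k l. k < CARD('n) \<Longrightarrow> l < CARD('n) \<Longrightarrow>
      complex_of_real (C $ inv h k $ inv h l) = (\<Sum>m<CARD('n). b m k * cnj (b m l))"
    using cholesky[OF herm_psd_of_psd_real[OF psd h]] by auto
  \<comment> \<open>realify the complex Cholesky factor: one real coordinate each for \<open>Re\<close> and \<open>Im\<close>\<close>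
  define u :: "'n \<Rightarrow> real^('n \<times> bool)" where
    "u i = (\<chi> q. if snd q then Re (b (h (fst q)) (h i)) else Im (b (h (fst q)) (h i)))" for i
  have "C $ i $ j = u i \<bullet> u j" for i j
  proof -
    have "u i \<bullet> u j = (\<Sum>q\<in>UNIV \<times> UNIV. u i $ q * u j $ q)"
      by (simp add: inner_vec_def UNIV_Times_UNIV)
    also have "\<dots> = (\<Sum>p\<in>UNIV. \<Sum>t\<in>UNIV. u i $ (p, t) * u j $ (p, t))"
      by (simp add: sum.cartesian_product case_prod_beta)
    also have "\<dots> = Re (\<Sum>p\<in>UNIV. b (h p) (h i) * cnj (b (h p) (h j)))"
      by (simp add: u_def UNIV_bool add.commute Re_sum)
    also have "\<dots> = Re (\<Sum>m<CARD('n). b m (h i) * cnj (b m (h j)))"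
      using sum.reindex_bij_betw[OF h, of "\<lambda>m. b m (h i) * cnj (b m (h j))"] by simp
    also have "\<dots> = C $ i $ j" using b[OF hlt hlt] hinv by (metis Re_complex_of_real)
    finally show ?thesis by simp
  qed
  then show ?thesis by blast
qed

lemma psd_real_gram_frame:
  "psd_real C \<Longrightarrow> \<exists>s \<alpha> c. gram_frame C s \<alpha> c \<and> rank C \<le> s"
  using psd_real_gram_vectors gram_frame_of_gram_vectors by metis

section \<open>A cpsd factorization of \<open>P_C\<close>\<close>

definition jw_embed :: "nat \<Rightarrow> (nat \<Rightarrow> real) \<Rightarrow> cmat" where
  "jw_embed s a = (\<Sum>k\<in>{..<s}. mat_scale (of_real (a k)) (jw_gamma s k))"

lemma mat_dim_jw_embed: "mat_dim (2^s) (jw_embed s a)"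
  by (simp add: jw_embed_def)

lemma hermitian_jw_embed: "hermitian (jw_embed s a)"
  by (simp add: jw_embed_def hermitian_jw_gamma)

lemma mat_tr_jw_embed: "mat_tr (2^s) (jw_embed s a) = 0"
  by (simp add: jw_embed_def mat_tr_sum mat_tr_scale mat_tr_jw_gamma)

lemma jw_embed_anticomm:
  "mat_mult (2^s) (jw_embed s a) (jw_embed s b) + mat_mult (2^s) (jw_embed s b) (jw_embed s a)
     = mat_scale (2 * of_real (\<Sum>k<s. a k * b k)) (mat_id (2^s))"
proof -
  have "mat_mult (2^s) (jw_embed s a) (jw_embed s b) + mat_mult (2^s) (jw_embed s b) (jw_embed s a)
      = mat_scale (2 * (\<Sum>k\<in>{..<s}. \<Sum>l\<in>{..<s}. of_real (a k) * of_real (b l) * (if k = l then 1 else 0))) (mat_id (2^s))"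
    unfolding jw_embed_def
    by (rule anticomm_lincomb[where M="\<lambda>k l. if k = l then 1 else 0"]) (simp add: jw_gamma_anticomm)
  also have "(\<Sum>k\<in>{..<s}. \<Sum>l\<in>{..<s}. of_real (a k) * of_real (b l) * (if k = l then 1 else 0))
      = (of_real (\<Sum>k<s. a k * b k) :: complex)"
    by (simp add: sum_sum_delta)
  finally show ?thesis .
qed

lemma jw_embed_sq:
  assumes "(\<Sum>k<s. a k * a k) = 1"
  shows "mat_mult (2^s) (jw_embed s a) (jw_embed s a) = mat_id (2^s)"
proof -
  have "mat_scale 2 (mat_mult (2^s) (jw_embed s a) (jw_embed s a)) = mat_scale 2 (mat_id (2^s))"
    using jw_embed_anticomm[of s a a] assms by (simp add: mat_add_self)
  then show ?thesis by (rule mat_scale_cancel) simp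
qed

lemma mat_tr_jw_embed_mult:
  "mat_tr (2^s) (mat_mult (2^s) (jw_embed s a) (jw_embed s b)) = 2^s * of_real (\<Sum>k<s. a k * b k)"
proof -
  have "2 * mat_tr (2^s) (mat_mult (2^s) (jw_embed s a) (jw_embed s b)) = 2 * (2^s * of_real (\<Sum>k<s. a k * b k))"
    using arg_cong[OF jw_embed_anticomm[of s a b], of "mat_tr (2^s)"]
      mat_tr_mult_comm[of "2^s" "jw_embed s b" "jw_embed s a"]
    by (simp add: mat_tr_add mat_tr_scale mat_tr_id)
  then show ?thesis by simp
qed

text \<open>For a unit vector \<open>a\<close> and \<open>\<sigma> = \<plusminus>1\<close>, \<open>jw_proj s \<sigma> a\<close> is twice the spectral projection of the
  involution \<open>jw_embed s a\<close> onto its \<open>\<sigma>\<close>-eigenspace.\<close>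
definition jw_proj :: "nat \<Rightarrow> real \<Rightarrow> (nat \<Rightarrow> real) \<Rightarrow> cmat" where
  "jw_proj s \<sigma> a = mat_id (2^s) + mat_scale (of_real \<sigma>) (jw_embed s a)"

lemma hermitian_jw_proj: "hermitian (jw_proj s \<sigma> a)"
  by (simp add: jw_proj_def hermitian_jw_embed)

lemma jw_proj_sq:
  assumes "(\<Sum>k<s. a k * a k) = 1" "\<sigma> * \<sigma> = 1"
  shows "mat_mult (2^s) (jw_proj s \<sigma> a) (jw_proj s \<sigma> a) = mat_scale 2 (jw_proj s \<sigma> a)"
proof -
  let ?Y = "jw_embed s a" and ?\<sigma> = "complex_of_real \<sigma>"
  have "mat_mult (2^s) (jw_proj s \<sigma> a) (jw_proj s \<sigma> a)
      = mat_id (2^s) + mat_scale ?\<sigma> ?Y + mat_scale ?\<sigma> ?Y + mat_scale (?\<sigma> * ?\<sigma>) (mat_mult (2^s) ?Y ?Y)"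
    by (simp add: jw_proj_def mat_mult_add_left mat_mult_add_right mat_mult_scale_left mat_mult_scale_right
        mat_mult_id_left mat_mult_id_right mat_dim_jw_embed mat_scale_scale mat_scale_add add.assoc)
  also have "?\<sigma> * ?\<sigma> = 1" using assms(2) by (simp flip: of_real_mult)
  also have "mat_id (2^s) + mat_scale ?\<sigma> ?Y + mat_scale ?\<sigma> ?Y + mat_scale 1 (mat_mult (2^s) ?Y ?Y)
      = mat_scale 2 (jw_proj s \<sigma> a)"
    by (simp add: jw_embed_sq[OF assms(1)] jw_proj_def fun_eq_iff mat_scale_def)
  finally show ?thesis .
qed

lemma mat_tr_jw_proj_mult:
  "mat_tr (2^s) (mat_mult (2^s) (jw_proj s \<sigma> a) (jw_proj s \<tau> b)) = 2^s * (1 + \<sigma> * \<tau> * (\<Sum>k<s. a k * b k))"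
  using mat_tr_jw_embed_mult[of s a b]
  by (simp add: jw_proj_def mat_mult_add_left mat_mult_add_right mat_mult_scale_left mat_mult_scale_right
      mat_mult_id_left mat_mult_id_right mat_dim_jw_embed mat_tr_add mat_tr_scale mat_tr_jw_embed mat_tr_id
      algebra_simps)

lemma herm_psd_of_hermitian_sq:
  assumes "hermitian N" "mat_mult d N N = mat_scale 2 N" "0 \<le> r"
  shows "herm_psd d (mat_scale (of_real r) N)"
proof -
  have "mat_scale (of_real r) N = mat_scale (of_real (r / 2)) (mat_mult d (mat_adj N) N)"
    using assms(1,2) by (simp add: hermitian_def mat_scale_scale)
  then show ?thesis using herm_psd_scale[OF herm_psd_gram, of "r / 2" d N] assms(3) by simp
qed

lemma P_mat_entry: "P_mat C $ x $ y = blk (C $ snd x $ snd y) $ fst x $ fst y"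
proof -
  have "P_mat C $ x $ y = (\<Sum>i\<in>UNIV. \<Sum>j\<in>UNIV. blk (C $ i $ j) $ fst x $ fst y * (if snd x = i \<and> snd y = j then 1 else 0))"
    by (simp add: P_mat_def kron_def unit_mat_def)
  also have "\<dots> = (\<Sum>i\<in>UNIV. if snd x = i then blk (C $ i $ snd y) $ fst x $ fst y else 0)"
    by (intro sum.cong refl) (simp add: if_distrib[of "\<lambda>t. _ * t"] cong: if_cong)
  also have "\<dots> = blk (C $ snd x $ snd y) $ fst x $ fst y" by simp
  finally show ?thesis .
qed

lemma blk_entry: "blk c $ a $ b = 1/4 * (if a = b then 1 + c else 1 - c)"
  by (simp add: blk_def)

definition block_sign :: "2 \<Rightarrow> real" where "block_sign a = (if a = 1 then 1 else -1)"

lemma block_sign_mult: "block_sign a * block_sign b = (if a = b then 1 else -1)"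
  using exhaust_2[of a] exhaust_2[of b] by (auto simp: block_sign_def)

lemma P_mat_cpsd_factorization:
  fixes C :: "real^'n^'n"
  assumes "C \<in> elliptope"
  shows "\<exists>d. cpsd_factorization (P_mat C) d"
proof -
  have "psd_real C" using assms by (simp add: elliptope_def)
  then obtain s \<alpha> c where frame: "gram_frame C s \<alpha> c" using psd_real_gram_frame by blast
  then have C: "C $ i $ j = (\<Sum>k<s. \<alpha> i k * \<alpha> j k)" for i j by (simp add: gram_frame_def)
  have unit: "(\<Sum>k<s. \<alpha> i k * \<alpha> i k) = 1" for i using assms by (simp add: elliptope_def flip: C)
  define P where "P x = mat_scale (of_real (1 / (2 * sqrt (2^s)))) (jw_proj s (block_sign (fst x)) (\<alpha> (snd x)))"
    for x :: "2 \<times> 'n"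
  have "herm_psd (2^s) (P x)" for x
    unfolding P_def
    by (rule herm_psd_of_hermitian_sq[OF hermitian_jw_proj jw_proj_sq[OF unit]])
      (simp_all add: block_sign_mult)
  moreover have "tr_prod (2^s) (P x) (P y) = complex_of_real (P_mat C $ x $ y)" for x y
  proof -
    have "tr_prod (2^s) (P x) (P y) = of_real (1 / (4 * 2^s))
        * mat_tr (2^s) (mat_mult (2^s) (jw_proj s (block_sign (fst x)) (\<alpha> (snd x))) (jw_proj s (block_sign (fst y)) (\<alpha> (snd y))))"
      by (simp add: tr_prod_eq_mat_tr P_def mat_mult_scale_left mat_mult_scale_right mat_tr_scale flip: of_real_mult)
    also have "\<dots> = complex_of_real (P_mat C $ x $ y)"
      unfolding mat_tr_jw_proj_mult by (simp add: P_mat_entry blk_entry block_sign_mult C field_simps)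
    finally show ?thesis .
  qed
  ultimately have "cpsd_factorization (P_mat C) (2^s)"
    unfolding cpsd_factorization_def by (intro conjI exI[of _ P]) auto
  then show ?thesis by blast
qed

section \<open>Perturbations of extreme points of the elliptope\<close>

lemma extreme_point_symmetric_perturbation:
  fixes x v :: "'a::real_vector"
  assumes "x extreme_point_of S" "x + v \<in> S" "x - v \<in> S"
  shows "v = 0"
proof (rule ccontr)
  assume "v \<noteq> 0"
  have "x + v \<noteq> x - v"
  proof
    assume "x + v = x - v"
    then have "2 *\<^sub>R v = 0" by (simp add: scaleR_2 algebra_simps)
    then show False using \<open>v \<noteq> 0\<close> by simp
  qed
  moreover have "midpoint (x + v) (x - v) = x" by (simp add: midpoint_def flip: scaleR_2)
  ultimately have "x \<in> open_segment (x + v) (x - v)" using midpoint_in_open_segment by metis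
  then show False using assms unfolding extreme_point_of_def by blast
qed

lemma elliptope_add_perturbation:
  fixes C D :: "real^'n^'n"
  assumes C: "C \<in> elliptope" and D: "transpose D = D" "\<And>i. D $ i $ i = 0"
    and bound: "\<And>x. \<bar>x \<bullet> (D *v x)\<bar> \<le> K * (x \<bullet> (C *v x))" and t: "\<bar>t\<bar> * K \<le> 1"
  shows "C + t *\<^sub>R D \<in> elliptope"
proof -
  have "0 \<le> x \<bullet> ((C + t *\<^sub>R D) *v x)" for x
  proof -
    have q: "0 \<le> x \<bullet> (C *v x)" using C by (simp add: elliptope_def psd_real_def)
    have "\<bar>t * (x \<bullet> (D *v x))\<bar> \<le> \<bar>t\<bar> * (K * (x \<bullet> (C *v x)))"
      unfolding abs_mult by (rule mult_left_mono[OF bound]) simp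
    also have "\<dots> \<le> x \<bullet> (C *v x)" using mult_right_mono[OF t q] by (simp add: mult.assoc)
    finally show ?thesis
      by (simp add: matrix_vector_mult_add_rdistrib inner_add_right flip: scaleR_matrix_vector_assoc)
  qed
  then show ?thesis
    using C D by (simp add: elliptope_def psd_real_def transpose_def vec_eq_iff)
qed

lemma sum4_swap:
  "(\<Sum>i\<in>A. \<Sum>j\<in>A. \<Sum>k\<in>K. \<Sum>l\<in>K. f i j k l) = (\<Sum>k\<in>K. \<Sum>l\<in>K. \<Sum>i\<in>A. \<Sum>j\<in>A. f i j k l)"
proof -
  have "(\<Sum>i\<in>A. \<Sum>j\<in>A. \<Sum>k\<in>K. \<Sum>l\<in>K. f i j k l) = (\<Sum>i\<in>A. \<Sum>k\<in>K. \<Sum>j\<in>A. \<Sum>l\<in>K. f i j k l)"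
    by (rule sum.cong[OF refl], rule sum.swap)
  also have "\<dots> = (\<Sum>k\<in>K. \<Sum>i\<in>A. \<Sum>j\<in>A. \<Sum>l\<in>K. f i j k l)" by (rule sum.swap)
  also have "\<dots> = (\<Sum>k\<in>K. \<Sum>i\<in>A. \<Sum>l\<in>K. \<Sum>j\<in>A. f i j k l)"
    by (rule sum.cong[OF refl], rule sum.cong[OF refl], rule sum.swap)
  also have "\<dots> = (\<Sum>k\<in>K. \<Sum>l\<in>K. \<Sum>i\<in>A. \<Sum>j\<in>A. f i j k l)"
    by (rule sum.cong[OF refl], rule sum.swap)
  finally show ?thesis .
qed

lemma bilinear_form_coords:
  fixes a b :: "'n::finite \<Rightarrow> real" and \<alpha> :: "'n \<Rightarrow> nat \<Rightarrow> real"
  shows "(\<Sum>i\<in>UNIV. \<Sum>j\<in>UNIV. a i * (\<Sum>k<s. \<Sum>l<s. \<alpha> i k * F k l * \<alpha> j l) * b j)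
    = (\<Sum>k<s. \<Sum>l<s. (\<Sum>i\<in>UNIV. a i * \<alpha> i k) * F k l * (\<Sum>j\<in>UNIV. b j * \<alpha> j l))"
proof -
  have "(\<Sum>i\<in>UNIV. \<Sum>j\<in>UNIV. a i * (\<Sum>k<s. \<Sum>l<s. \<alpha> i k * F k l * \<alpha> j l) * b j)
      = (\<Sum>i\<in>UNIV. \<Sum>j\<in>UNIV. \<Sum>k<s. \<Sum>l<s. (a i * \<alpha> i k) * F k l * (b j * \<alpha> j l))"
    by (simp add: sum_distrib_left sum_distrib_right mult.commute mult.left_commute)
  also have "\<dots> = (\<Sum>k<s. \<Sum>l<s. \<Sum>i\<in>UNIV. \<Sum>j\<in>UNIV. (a i * \<alpha> i k) * F k l * (b j * \<alpha> j l))"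
    by (rule sum4_swap)
  also have "\<dots> = (\<Sum>k<s. \<Sum>l<s. (\<Sum>i\<in>UNIV. a i * \<alpha> i k) * F k l * (\<Sum>j\<in>UNIV. b j * \<alpha> j l))"
    apply (simp add: sum_distrib_left sum_distrib_right)
    apply (rule sum.cong[OF refl], rule sum.cong[OF refl], rule sum.swap)
    done
  finally show ?thesis .
qed

lemma abs_quad_form_le:
  fixes y :: "nat \<Rightarrow> real"
  shows "\<bar>\<Sum>k<s. \<Sum>l<s. y k * T k l * y l\<bar> \<le> (\<Sum>k<s. \<Sum>l<s. \<bar>T k l\<bar>) * (\<Sum>k<s. y k * y k)"
proof -
  let ?Y = "\<Sum>k<s. y k * y k"
  have yk: "y k * y k \<le> ?Y" if "k < s" for k
    using member_le_sum[of k "{..<s}" "\<lambda>k. y k * y k"] that by simp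
  have yy: "\<bar>y k\<bar> * \<bar>y l\<bar> \<le> ?Y" if "k < s" "l < s" for k l
  proof -
    have "2 * (\<bar>y k\<bar> * \<bar>y l\<bar>) \<le> y k * y k + y l * y l"
      using sum_squares_ge_zero[of "\<bar>y k\<bar> - \<bar>y l\<bar>" 0]
      by (simp add: algebra_simps power2_eq_square abs_mult_self_eq)
    then show ?thesis using yk[OF that(1)] yk[OF that(2)] by linarith
  qed
  have "\<bar>\<Sum>k<s. \<Sum>l<s. y k * T k l * y l\<bar> \<le> (\<Sum>k<s. \<Sum>l<s. \<bar>y k * T k l * y l\<bar>)"
    by (rule order_trans[OF sum_abs], rule sum_mono, rule sum_abs)
  also have "\<dots> \<le> (\<Sum>k<s. \<Sum>l<s. \<bar>T k l\<bar> * ?Y)"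
  proof (intro sum_mono)
    fix k l assume "k \<in> {..<s}" "l \<in> {..<s}"
    then have "\<bar>y k\<bar> * \<bar>y l\<bar> \<le> ?Y" using yy by simp
    then have "\<bar>T k l\<bar> * (\<bar>y k\<bar> * \<bar>y l\<bar>) \<le> \<bar>T k l\<bar> * ?Y" by (simp add: mult_left_mono)
    then show "\<bar>y k * T k l * y l\<bar> \<le> \<bar>T k l\<bar> * ?Y" by (simp add: abs_mult mult_ac)
  qed
  also have "\<dots> = (\<Sum>k<s. \<Sum>l<s. \<bar>T k l\<bar>) * ?Y" by (simp add: sum_distrib_right)
  finally show ?thesis .
qed

lemma sum_sum_delta_both: "k < (s::nat) \<Longrightarrow> l < s \<Longrightarrow>
  (\<Sum>k'<s. \<Sum>l'<s. (if k = k' then 1 else 0) * F k' l' * (if l = l' then 1 else (0::real))) = F k l"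
proof -
  assume kl: "k < s" "l < s"
  have "(\<Sum>l'<s. (if k = k' then 1 else 0) * F k' l' * (if l = l' then 1 else (0::real))) = (if k = k' then F k' l else 0)" for k'
    using kl by (cases "k = k'") (simp_all add: if_distrib[of "\<lambda>t. _ * t"] cong: if_cong)
  then show ?thesis using kl by (simp add: sum.delta')
qed

text \<open>If \<open>C = \<alpha> \<alpha>\<^sup>T\<close> and \<open>\<alpha> T \<alpha>\<^sup>T\<close> has zero diagonal, the perturbation is dominated by \<open>C\<close>, so
  \<open>C \<plusminus> \<epsilon> \<alpha> T \<alpha>\<^sup>T\<close> stay in the elliptope for small \<open>\<epsilon>\<close>; extremality then forces \<open>\<alpha> T \<alpha>\<^sup>T = 0\<close>.\<close>
lemma extreme_elliptope_gram_perturbation: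
  fixes C :: "real^'n^'n" and \<alpha> :: "'n \<Rightarrow> nat \<Rightarrow> real"
  assumes extreme: "C extreme_point_of elliptope"
    and C: "\<And>i j. C $ i $ j = (\<Sum>k<s. \<alpha> i k * \<alpha> j k)"
    and T: "\<And>k l. T k l = T l k" "\<And>i. (\<Sum>k<s. \<Sum>l<s. \<alpha> i k * T k l * \<alpha> i l) = 0"
  shows "(\<Sum>k<s. \<Sum>l<s. \<alpha> i k * T k l * \<alpha> j l) = 0"
proof -
  define D :: "real^'n^'n" where "D = (\<chi> i j. \<Sum>k<s. \<Sum>l<s. \<alpha> i k * T k l * \<alpha> j l)"
  define K where "K = (\<Sum>k<s. \<Sum>l<s. \<bar>T k l\<bar>)"
  have "K \<ge> 0" by (simp add: K_def sum_nonneg)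
  define \<epsilon> where "\<epsilon> = 1 / (1 + K)"
  have \<epsilon>: "\<epsilon> > 0" "\<bar>\<epsilon>\<bar> * K \<le> 1" "\<bar>-\<epsilon>\<bar> * K \<le> 1" using \<open>K \<ge> 0\<close> by (auto simp: \<epsilon>_def field_simps)
  have "transpose D = D"
  proof -
    have "(\<Sum>k<s. \<Sum>l<s. \<alpha> j k * T k l * \<alpha> i l) = (\<Sum>k<s. \<Sum>l<s. \<alpha> i k * T k l * \<alpha> j l)" for i j
      by (subst sum.swap) (simp add: T(1) mult_ac)
    then show ?thesis by (simp add: D_def transpose_def vec_eq_iff)
  qed
  moreover have "\<And>i. D $ i $ i = 0" using T(2) by (simp add: D_def)
  moreover have "\<bar>x \<bullet> (D *v x)\<bar> \<le> K * (x \<bullet> (C *v x))" for x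
  proof -
    define y where "y k = (\<Sum>i\<in>UNIV. x $ i * \<alpha> i k)" for k
    have "x \<bullet> (C *v x) = (\<Sum>k<s. \<Sum>l<s. y k * (if k = l then 1 else 0) * y l)"
      unfolding inner_mat_vec_sum y_def bilinear_form_coords[symmetric]
      by (simp add: C if_distrib[of "\<lambda>t. _ * t"] if_distrib[of "\<lambda>t. t * _"] cong: if_cong)
    also have "\<dots> = (\<Sum>k<s. y k * y k)"
      by (simp add: if_distrib[of "\<lambda>t. _ * t"] if_distrib[of "\<lambda>t. t * _"] cong: if_cong)
    finally have "x \<bullet> (C *v x) = (\<Sum>k<s. y k * y k)" .
    moreover have "x \<bullet> (D *v x) = (\<Sum>k<s. \<Sum>l<s. y k * T k l * y l)"
      unfolding D_def by (simp only: inner_mat_vec_sum vec_lambda_beta bilinear_form_coords y_def)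
    ultimately show ?thesis unfolding K_def by (simp only: abs_quad_form_le)
  qed
  ultimately have "C + t *\<^sub>R D \<in> elliptope" if "\<bar>t\<bar> * K \<le> 1" for t
    using elliptope_add_perturbation[of C D K] extreme that by (auto simp: extreme_point_of_def)
  from this[OF \<epsilon>(2)] this[OF \<epsilon>(3)]
  have "C + \<epsilon> *\<^sub>R D \<in> elliptope" "C - \<epsilon> *\<^sub>R D \<in> elliptope" by simp_all
  then have "\<epsilon> *\<^sub>R D = 0" using extreme_point_symmetric_perturbation[OF extreme] by blast
  then show ?thesis using \<epsilon>(1) by (simp add: D_def vec_eq_iff)
qed

lemma extreme_elliptope_gram_null:
  fixes C :: "real^'n^'n"
  assumes extreme: "C extreme_point_of elliptope" and frame: "gram_frame C s \<alpha> c"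
    and T: "\<And>k l. T k l = T l k" "\<And>i. (\<Sum>k<s. \<Sum>l<s. \<alpha> i k * T k l * \<alpha> i l) = 0"
    and kl: "k < s" "l < s"
  shows "T k l = 0"
proof -
  have C: "\<And>i j. C $ i $ j = (\<Sum>k<s. \<alpha> i k * \<alpha> j k)"
    and c: "\<And>k l. k < s \<Longrightarrow> l < s \<Longrightarrow> (\<Sum>i\<in>UNIV. c k i * \<alpha> i l) = (if k = l then 1 else 0)"
    using frame by (auto simp: gram_frame_def)
  have "0 = (\<Sum>i\<in>UNIV. \<Sum>j\<in>UNIV. c k i * (\<Sum>k<s. \<Sum>l<s. \<alpha> i k * T k l * \<alpha> j l) * c l j)"
    by (simp add: extreme_elliptope_gram_perturbation[OF extreme C T])
  also have "\<dots> = (\<Sum>k'<s. \<Sum>l'<s. (\<Sum>i\<in>UNIV. c k i * \<alpha> i k') * T k' l' * (\<Sum>j\<in>UNIV. c l j * \<alpha> j l'))"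
    by (rule bilinear_form_coords)
  also have "\<dots> = (\<Sum>k'<s. \<Sum>l'<s. (if k = k' then 1 else 0) * T k' l' * (if l = l' then 1 else 0))"
    using c kl by (intro sum.cong refl) simp
  also have "\<dots> = T k l" using kl by (rule sum_sum_delta_both)
  finally show ?thesis by simp
qed

section \<open>Clifford families and the dimension bound\<close>

primrec mat_pow :: "nat \<Rightarrow> cmat \<Rightarrow> nat \<Rightarrow> cmat" where
  "mat_pow d A 0 = mat_id d"
| "mat_pow d A (Suc n) = mat_mult d A (mat_pow d A n)"

lemma mat_dim_pow[simp]: "mat_dim d (mat_pow d A n)"
  by (induction n) auto

lemma mat_pow_add: "mat_mult d (mat_pow d A a) (mat_pow d A b) = mat_pow d A (a + b)"
  by (induction a) (simp_all add: mat_mult_id_left mat_mult_assoc)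

lemma mat_pow_one: "mat_dim d A \<Longrightarrow> mat_pow d A 1 = A"
  by (simp add: mat_mult_id_right)

lemma mat_pow_mult_self: "mat_pow d (mat_mult d A A) n = mat_pow d A (2 * n)"
  by (induction n) (simp_all add: mat_mult_assoc)

lemma mat_pow_commute:
  assumes "mat_mult d A B = mat_mult d B A" "mat_dim d B"
  shows "mat_mult d (mat_pow d A n) B = mat_mult d B (mat_pow d A n)"
proof (induction n)
  case 0
  show ?case using assms(2) by (simp add: mat_mult_id_left mat_mult_id_right)
next
  case (Suc n)
  have "mat_mult d (mat_mult d A (mat_pow d A n)) B = mat_mult d A (mat_mult d B (mat_pow d A n))"
    using Suc by (simp add: mat_mult_assoc)
  also have "\<dots> = mat_mult d B (mat_mult d A (mat_pow d A n))"
    using assms(1) by (simp add: mat_mult_assoc[symmetric])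
  finally show ?case by simp
qed

lemma hermitian_mat_pow:
  assumes "mat_dim d A" "hermitian A"
  shows "hermitian (mat_pow d A n)"
proof (induction n)
  case (Suc n)
  then show ?case using assms mat_pow_commute[OF refl assms(1), of n]
    unfolding hermitian_def by (simp add: mat_adj_mult)
qed simp

lemma hermitian_mult_self_ne_0:
  assumes "mat_dim d A" "hermitian A" "A \<noteq> 0"
  shows "mat_mult d A A \<noteq> 0"
  using mat_tr_mult_adj_pos(1)[OF assms(1,3)] assms(2) by (auto simp: hermitian_def)

lemma mat_pow_ne_0:
  assumes "mat_dim d A" "hermitian A" "A \<noteq> 0"
  shows "mat_pow d A n \<noteq> 0"
proof -
  have pow2: "mat_pow d A (2^j) \<noteq> 0" for j
  proof (induction j)
    case 0
    show ?case using assms(3) mat_pow_one[OF assms(1)] by (metis power_0)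
  next
    case (Suc j)
    have "mat_pow d A (2^Suc j) = mat_mult d (mat_pow d A (2^j)) (mat_pow d A (2^j))"
      by (simp add: mat_pow_add mult_2)
    then show ?case
      using hermitian_mult_self_ne_0[OF mat_dim_pow hermitian_mat_pow[OF assms(1,2)] Suc.IH] by metis
  qed
  have "mat_pow d A (2^n) = mat_mult d (mat_pow d A (2^n - n)) (mat_pow d A n)"
    using less_exp[of n] by (simp add: mat_pow_add)
  then show ?thesis using pow2[of n] by auto
qed

lemma mat_tr_pow_even_ne_0:
  assumes "mat_dim d A" "hermitian A" "A \<noteq> 0"
  shows "mat_tr d (mat_pow d A (2 * n)) \<noteq> 0"
proof -
  have "mat_pow d A (2 * n) = mat_mult d (mat_pow d A n) (mat_adj (mat_pow d A n))"
    using hermitian_mat_pow[OF assms(1,2), of n] by (simp add: hermitian_def mat_pow_add mult_2)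
  then show ?thesis using mat_tr_mult_adj_pos(1)[OF mat_dim_pow mat_pow_ne_0[OF assms, of n]] by auto
qed

lemma obtain_odd_card_remove:
  fixes m :: nat
  assumes "V \<subseteq> {..<m}" "V \<noteq> {}" "even m"
  obtains k where "k < m" "odd (card (V - {k}))"
proof (cases "even (card V)")
  case True
  obtain k where k: "k \<in> V" using assms(2) by blast
  have "finite V" using finite_subset[OF assms(1)] by simp
  then obtain c where c: "card V = Suc c" using k by (metis card_gt_0_iff emptyE gr0_conv_Suc)
  then have "card (V - {k}) = c" using k by (simp add: card_Diff_singleton)
  then have "odd (card (V - {k}))" using True c by simp
  moreover have "k < m" using k assms(1) by blast
  ultimately show thesis using that by blast
next
  case False
  have "V \<noteq> {..<m}"
  proof
    assume "V = {..<m}"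
    then show False using False assms(3) by simp
  qed
  then have "\<not> {..<m} \<subseteq> V" using assms(1) by (metis subset_antisym)
  then obtain k where k: "k < m" "k \<notin> V" by (auto simp: subset_iff)
  then have "V - {k} = V" by blast
  then show thesis using that[of k] k False by simp
qed

interpretation cmat_vs: vector_space "mat_scale :: complex \<Rightarrow> cmat \<Rightarrow> cmat"
  by unfold_locales (simp_all add: mat_scale_add mat_scale_add_left mat_scale_scale)

definition mat_unit :: "nat \<Rightarrow> nat \<Rightarrow> cmat" where "mat_unit k l = (\<lambda>a b. if a = k \<and> b = l then 1 else 0)"

lemma mat_dim_in_span_units:
  assumes "mat_dim d X"
  shows "X \<in> cmat_vs.span ((\<lambda>(k, l). mat_unit k l) ` ({..<d} \<times> {..<d}))"
proof -
  let ?E = "(\<lambda>(k, l). mat_unit k l) ` ({..<d} \<times> {..<d})"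
  have "X = (\<Sum>p\<in>{..<d} \<times> {..<d}. mat_scale (X (fst p) (snd p)) (mat_unit (fst p) (snd p)))"
  proof (rule mat_dim_eqI[OF assms])
    show "mat_dim d (\<Sum>p\<in>{..<d} \<times> {..<d}. mat_scale (X (fst p) (snd p)) (mat_unit (fst p) (snd p)))"
      by (rule mat_dim_sum) (auto simp: mat_dim_def mat_unit_def mat_scale_def)
    fix a b assume ab: "a < d" "b < d"
    have "(\<Sum>p\<in>{..<d} \<times> {..<d}. mat_scale (X (fst p) (snd p)) (mat_unit (fst p) (snd p))) a b
        = (\<Sum>p\<in>{..<d} \<times> {..<d}. if p = (a, b) then X a b else 0)"
      unfolding sum_apply2 by (intro sum.cong refl) (auto simp: mat_scale_def mat_unit_def)
    also have "\<dots> = X a b" using ab by (simp add: sum.delta')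
    finally show "X a b = (\<Sum>p\<in>{..<d} \<times> {..<d}. mat_scale (X (fst p) (snd p)) (mat_unit (fst p) (snd p))) a b" by simp
  qed
  also have "\<dots> \<in> cmat_vs.span ?E"
    by (intro cmat_vs.span_sum cmat_vs.span_scale cmat_vs.span_base) (fastforce simp: image_iff)
  finally show ?thesis .
qed

text \<open>For even \<open>m\<close>, the functional \<open>trace_coeff T\<close> (trace against \<open>Q\<^sup>2\<close> times the reversed
  product over \<open>T\<close>) is nonzero on the ordered product over \<open>T\<close> and vanishes on all other ordered
  products, so these \<open>2\<^sup>m\<close> products are linearly independent among the \<open>d \<times> d\<close> matrices.\<close>
locale clifford_family =
  fixes d m :: nat and Y :: "nat \<Rightarrow> cmat" and Q :: cmat
  assumes dim_Y: "\<And>k. k < m \<Longrightarrow> mat_dim d (Y k)"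
    and dim_Q: "mat_dim d Q" and hermitian_Q: "hermitian Q" and Q_ne_0: "Q \<noteq> 0"
    and anticomm: "\<And>k l. k < m \<Longrightarrow> l < m \<Longrightarrow>
        mat_mult d (Y k) (Y l) + mat_mult d (Y l) (Y k) = mat_scale (2 * (if k = l then 1 else 0)) (mat_mult d Q Q)"
    and even_m: "even m"
begin

definition R :: cmat where "R = mat_mult d Q Q"

primrec ordered_prod :: "nat \<Rightarrow> nat set \<Rightarrow> cmat" where
  "ordered_prod 0 S = mat_id d"
| "ordered_prod (Suc n) S = (if n \<in> S then mat_mult d (ordered_prod n S) (Y n) else ordered_prod n S)"

primrec reversed_prod :: "nat \<Rightarrow> nat set \<Rightarrow> cmat" where
  "reversed_prod 0 S = mat_id d"
| "reversed_prod (Suc n) S = (if n \<in> S then mat_mult d (Y n) (reversed_prod n S) else reversed_prod n S)"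

lemma mat_dim_R: "mat_dim d R" by (simp add: R_def)
lemma mat_dim_ordered_prod: "mat_dim d (ordered_prod n S)" by (induction n) auto

lemma Y_sq: "k < m \<Longrightarrow> mat_mult d (Y k) (Y k) = R"
proof -
  assume k: "k < m"
  have "mat_scale 2 (mat_mult d (Y k) (Y k)) = mat_scale 2 R" using anticomm[OF k k] by (simp add: mat_add_self R_def)
  then show ?thesis by (rule mat_scale_cancel) simp
qed

lemma Y_anticomm:
  "k < m \<Longrightarrow> l < m \<Longrightarrow> k \<noteq> l \<Longrightarrow> mat_mult d (Y k) (Y l) = - mat_mult d (Y l) (Y k)"
proof -
  assume "k < m" "l < m" "k \<noteq> l"
  then have "mat_mult d (Y k) (Y l) + mat_mult d (Y l) (Y k) = 0" using anticomm by simp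
  then show ?thesis by (simp add: eq_neg_iff_add_eq_0)
qed

lemma R_Y_comm: "k < m \<Longrightarrow> mat_mult d R (Y k) = mat_mult d (Y k) R"
  by (simp add: Y_sq[symmetric] mat_mult_assoc)

lemma R_ordered_prod_comm:
  "n \<le> m \<Longrightarrow> mat_mult d R (ordered_prod n S) = mat_mult d (ordered_prod n S) R"
proof (induction n)
  case 0 then show ?case by (simp add: mat_mult_id_left mat_mult_id_right mat_dim_R)
next
  case (Suc n)
  then have n: "n < m" by simp
  show ?case
  proof (cases "n \<in> S")
    case True
    have "mat_mult d R (mat_mult d (ordered_prod n S) (Y n)) = mat_mult d (mat_mult d (ordered_prod n S) R) (Y n)"
      using Suc by (simp add: mat_mult_assoc[symmetric])
    also have "\<dots> = mat_mult d (mat_mult d (ordered_prod n S) (Y n)) R" by (simp add: mat_mult_assoc R_Y_comm[OF n])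
    finally show ?thesis using True by simp
  next
    case False then show ?thesis using Suc by simp
  qed
qed

definition swap_sign :: "nat \<Rightarrow> nat \<Rightarrow> nat set \<Rightarrow> complex" where
  "swap_sign k n S = (-1) ^ card ((S \<inter> {..<n}) - {k})"

lemma Y_mult_ordered_prod:
  "k < m \<Longrightarrow> n \<le> m \<Longrightarrow> mat_mult d (Y k) (ordered_prod n S) = mat_scale (swap_sign k n S) (mat_mult d (ordered_prod n S) (Y k))"
proof (induction n)
  case 0 then show ?case using dim_Y by (simp add: mat_mult_id_left mat_mult_id_right swap_sign_def)
next
  case (Suc n)
  then have n: "n < m" and IH: "mat_mult d (Y k) (ordered_prod n S) = mat_scale (swap_sign k n S) (mat_mult d (ordered_prod n S) (Y k))" by auto
  show ?case
  proof (cases "n \<in> S")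
    case False
    then have "S \<inter> {..<Suc n} = S \<inter> {..<n}" by (auto simp: less_Suc_eq)
    then show ?thesis using False IH by (simp add: swap_sign_def)
  next
    case True
    have eq: "mat_mult d (Y k) (mat_mult d (ordered_prod n S) (Y n)) = mat_scale (swap_sign k n S) (mat_mult d (ordered_prod n S) (mat_mult d (Y k) (Y n)))"
      by (simp add: mat_mult_assoc[symmetric] IH mat_mult_scale_left)
    show ?thesis
    proof (cases "k = n")
      case True
      have "(S \<inter> {..<Suc n}) - {k} = (S \<inter> {..<n}) - {k}" using True by (auto simp: less_Suc_eq)
      then have "swap_sign k (Suc n) S = swap_sign k n S" by (simp add: swap_sign_def)
      then show ?thesis using eq True \<open>n \<in> S\<close> by (simp add: mat_mult_assoc)
    next
      case False
      have "(S \<inter> {..<Suc n}) - {k} = insert n ((S \<inter> {..<n}) - {k})" using False \<open>n \<in> S\<close> by (auto simp: less_Suc_eq)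
      then have jw_sign: "swap_sign k (Suc n) S = - swap_sign k n S" by (simp add: swap_sign_def)
      have a: "mat_mult d (Y k) (Y n) = - mat_mult d (Y n) (Y k)" using Y_anticomm[OF Suc.prems(1) n False] .
      have "mat_mult d (Y k) (mat_mult d (ordered_prod n S) (Y n)) = mat_scale (swap_sign k n S) (- mat_mult d (ordered_prod n S) (mat_mult d (Y n) (Y k)))"
        unfolding eq a mat_mult_neg_right ..
      also have "\<dots> = mat_scale (- swap_sign k n S) (mat_mult d (mat_mult d (ordered_prod n S) (Y n)) (Y k))"
        by (simp only: mat_scale_neg mat_mult_assoc)
      finally have "mat_mult d (Y k) (mat_mult d (ordered_prod n S) (Y n)) = mat_scale (- swap_sign k n S) (mat_mult d (mat_mult d (ordered_prod n S) (Y n)) (Y k))" .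
      then show ?thesis using \<open>n \<in> S\<close> jw_sign by simp
    qed
  qed
qed

lemma Y_mult_reversed_prod:
  "k < m \<Longrightarrow> n \<le> m \<Longrightarrow> mat_mult d (Y k) (reversed_prod n S) = mat_scale (swap_sign k n S) (mat_mult d (reversed_prod n S) (Y k))"
proof (induction n)
  case 0 then show ?case using dim_Y by (simp add: mat_mult_id_left mat_mult_id_right swap_sign_def)
next
  case (Suc n)
  then have n: "n < m" and IH: "mat_mult d (Y k) (reversed_prod n S) = mat_scale (swap_sign k n S) (mat_mult d (reversed_prod n S) (Y k))" by auto
  show ?case
  proof (cases "n \<in> S")
    case False
    then have "S \<inter> {..<Suc n} = S \<inter> {..<n}" by (auto simp: less_Suc_eq)
    then show ?thesis using False IH by (simp add: swap_sign_def)
  next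
    case True
    show ?thesis
    proof (cases "k = n")
      case True
      have "(S \<inter> {..<Suc n}) - {k} = (S \<inter> {..<n}) - {k}" using True by (auto simp: less_Suc_eq)
      then have "swap_sign k (Suc n) S = swap_sign k n S" by (simp add: swap_sign_def)
      have "mat_mult d (Y n) (mat_mult d (Y n) (reversed_prod n S)) = mat_scale (swap_sign k n S) (mat_mult d (Y n) (mat_mult d (reversed_prod n S) (Y n)))"
        using IH True by (simp only: mat_mult_scale_right)
      also have "\<dots> = mat_scale (swap_sign k n S) (mat_mult d (mat_mult d (Y n) (reversed_prod n S)) (Y n))" by (simp only: mat_mult_assoc)
      finally show ?thesis using True \<open>n \<in> S\<close> \<open>swap_sign k (Suc n) S = swap_sign k n S\<close> by simp
    next
      case False
      have "(S \<inter> {..<Suc n}) - {k} = insert n ((S \<inter> {..<n}) - {k})" using False \<open>n \<in> S\<close> by (auto simp: less_Suc_eq)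
      then have jw_sign: "swap_sign k (Suc n) S = - swap_sign k n S" by (simp add: swap_sign_def)
      have a: "mat_mult d (Y k) (Y n) = - mat_mult d (Y n) (Y k)" using Y_anticomm[OF Suc.prems(1) n False] .
      have "mat_mult d (Y k) (mat_mult d (Y n) (reversed_prod n S)) = mat_mult d (- mat_mult d (Y n) (Y k)) (reversed_prod n S)"
        by (simp add: mat_mult_assoc[symmetric] a)
      also have "\<dots> = - mat_mult d (Y n) (mat_mult d (Y k) (reversed_prod n S))" by (simp add: mat_mult_neg_left mat_mult_assoc)
      also have "\<dots> = - mat_scale (swap_sign k n S) (mat_mult d (Y n) (mat_mult d (reversed_prod n S) (Y k)))"
        by (simp only: IH mat_mult_scale_right)
      also have "\<dots> = mat_scale (- swap_sign k n S) (mat_mult d (mat_mult d (Y n) (reversed_prod n S)) (Y k))"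
        by (simp add: mat_mult_assoc fun_eq_iff mat_scale_def)
      finally show ?thesis using \<open>n \<in> S\<close> jw_sign by simp
    qed
  qed
qed

lemma ordered_prod_reversed_prod:
  "n \<le> m \<Longrightarrow> \<exists>\<sigma>. mat_mult d (ordered_prod n S) (reversed_prod n T)
     = mat_scale \<sigma> (mat_mult d (mat_pow d R (card (S \<inter> T \<inter> {..<n}))) (ordered_prod n (S - T \<union> (T - S))))"
proof (induction n)
  case 0 then show ?case by (intro exI[of _ 1]) (simp add: mat_mult_id_left)
next
  case (Suc n)
  then have n: "n < m" and "n \<le> m" by auto
  then obtain \<sigma> where IH: "mat_mult d (ordered_prod n S) (reversed_prod n T) = mat_scale \<sigma> (mat_mult d (mat_pow d R (card (S \<inter> T \<inter> {..<n}))) (ordered_prod n (S - T \<union> (T - S))))"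
    using Suc.IH by blast
  let ?e = "card (S \<inter> T \<inter> {..<n})"
  let ?F = "ordered_prod n S" and ?G = "reversed_prod n T" and ?F' = "ordered_prod n (S - T \<union> (T - S))"
  show ?case
  proof (cases "n \<in> S"; cases "n \<in> T")
    assume a: "n \<in> S" "n \<in> T"
    have c: "S \<inter> T \<inter> {..<Suc n} = insert n (S \<inter> T \<inter> {..<n})" using a by (auto simp: less_Suc_eq)
    have ns: "n \<notin> (S - T \<union> (T - S))" using a by auto
    have "mat_mult d (mat_mult d ?F (Y n)) (mat_mult d (Y n) ?G) = mat_mult d ?F (mat_mult d R ?G)"
      by (simp only: Y_sq[OF n, symmetric] mat_mult_assoc)
    also have "\<dots> = mat_mult d R (mat_mult d ?F ?G)"
      using R_ordered_prod_comm[OF \<open>n \<le> m\<close>] by (simp add: mat_mult_assoc[symmetric])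
    also have "\<dots> = mat_scale \<sigma> (mat_mult d (mat_pow d R (Suc ?e)) ?F')"
      by (simp add: IH mat_mult_scale_right mat_mult_assoc)
    finally show ?thesis using a c ns by (intro exI[of _ \<sigma>]) simp
  next
    assume a: "n \<in> S" "n \<notin> T"
    have c: "S \<inter> T \<inter> {..<Suc n} = S \<inter> T \<inter> {..<n}" using a by (auto simp: less_Suc_eq)
    have ns: "n \<in> (S - T \<union> (T - S))" using a by auto
    have "mat_mult d (mat_mult d ?F (Y n)) ?G = mat_mult d ?F (mat_scale (swap_sign n n T) (mat_mult d ?G (Y n)))"
      by (simp add: mat_mult_assoc Y_mult_reversed_prod[OF n \<open>n \<le> m\<close>])
    also have "\<dots> = mat_scale (swap_sign n n T * \<sigma>) (mat_mult d (mat_pow d R ?e) (mat_mult d ?F' (Y n)))"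
      by (simp add: mat_mult_scale_right mat_mult_assoc[symmetric] IH mat_mult_scale_left mat_scale_scale)
    finally show ?thesis using a c ns by (intro exI[of _ "swap_sign n n T * \<sigma>"]) simp
  next
    assume a: "n \<notin> S" "n \<in> T"
    have c: "S \<inter> T \<inter> {..<Suc n} = S \<inter> T \<inter> {..<n}" using a by (auto simp: less_Suc_eq)
    have ns: "n \<in> (S - T \<union> (T - S))" using a by auto
    have "mat_mult d ?F (mat_mult d (Y n) ?G) = mat_mult d ?F (mat_scale (swap_sign n n T) (mat_mult d ?G (Y n)))"
      by (simp add: Y_mult_reversed_prod[OF n \<open>n \<le> m\<close>])
    also have "\<dots> = mat_scale (swap_sign n n T * \<sigma>) (mat_mult d (mat_pow d R ?e) (mat_mult d ?F' (Y n)))"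
      by (simp add: mat_mult_scale_right mat_mult_assoc[symmetric] IH mat_mult_scale_left mat_scale_scale)
    finally show ?thesis using a c ns by (intro exI[of _ "swap_sign n n T * \<sigma>"]) simp
  next
    assume a: "n \<notin> S" "n \<notin> T"
    have c: "S \<inter> T \<inter> {..<Suc n} = S \<inter> T \<inter> {..<n}" using a by (auto simp: less_Suc_eq)
    have ns: "n \<notin> (S - T \<union> (T - S))" using a by auto
    show ?thesis using a c ns IH by (intro exI[of _ \<sigma>]) simp
  qed
qed

lemma ordered_prod_reversed_prod_same:
  "n \<le> m \<Longrightarrow> mat_mult d (ordered_prod n S) (reversed_prod n S) = mat_pow d R (card (S \<inter> {..<n}))"
proof (induction n)
  case 0 then show ?case by (simp add: mat_mult_id_left)
next
  case (Suc n)
  then have n: "n < m" and nm: "n \<le> m" by auto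
  show ?case
  proof (cases "n \<in> S")
    case True
    have c: "S \<inter> {..<Suc n} = insert n (S \<inter> {..<n})" using True by (auto simp: less_Suc_eq)
    have "mat_mult d (mat_mult d (ordered_prod n S) (Y n)) (mat_mult d (Y n) (reversed_prod n S)) = mat_mult d (ordered_prod n S) (mat_mult d R (reversed_prod n S))"
      by (simp only: Y_sq[OF n, symmetric] mat_mult_assoc)
    also have "\<dots> = mat_mult d R (mat_mult d (ordered_prod n S) (reversed_prod n S))"
      using R_ordered_prod_comm[OF nm] by (simp add: mat_mult_assoc[symmetric])
    also have "\<dots> = mat_pow d R (Suc (card (S \<inter> {..<n})))" using Suc by simp
    finally show ?thesis using True c by simp
  next
    case False
    then have "S \<inter> {..<Suc n} = S \<inter> {..<n}" by (auto simp: less_Suc_eq)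
    then show ?thesis using False Suc by simp
  qed
qed

lemma mat_tr_pow_R_mult_ordered_prod:
  assumes ne: "U \<inter> {..<m} \<noteq> {}"
  shows "mat_tr d (mat_mult d (mat_pow d R (Suc e)) (ordered_prod m U)) = 0"
proof -
  obtain k where k: "k < m" and odd: "odd (card (U \<inter> {..<m} - {k}))"
    using obtain_odd_card_remove[of "U \<inter> {..<m}" m] ne even_m by blast
  let ?F = "ordered_prod m U" and ?P = "mat_pow d R e" and ?Y = "Y k"
  have sgn: "swap_sign k m U = -1" using odd by (simp add: swap_sign_def)
  have YF: "mat_mult d ?Y ?F = - mat_mult d ?F ?Y" using Y_mult_ordered_prod[OF k order_refl, of U] sgn by (simp add: mat_scale_minus_one)
  have FY: "mat_mult d ?F ?Y = - mat_mult d ?Y ?F" using YF by simp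
  have "mat_pow d R (Suc e) = mat_mult d ?Y (mat_mult d ?Y ?P)"
    by (simp add: Y_sq[OF k] flip: mat_mult_assoc)
  then have s1: "mat_tr d (mat_mult d (mat_pow d R (Suc e)) ?F) = mat_tr d (mat_mult d ?Y (mat_mult d ?Y (mat_mult d ?P ?F)))"
    by (simp only: mat_mult_assoc)
  have PY: "mat_mult d ?P (mat_mult d ?Y ?F) = mat_mult d ?Y (mat_mult d ?P ?F)"
    by (simp only: mat_mult_assoc[symmetric] mat_pow_commute[OF R_Y_comm[OF k] dim_Y[OF k]])
  have "mat_tr d (mat_mult d ?Y (mat_mult d ?Y (mat_mult d ?P ?F))) = mat_tr d (mat_mult d (mat_mult d ?Y (mat_mult d ?P ?F)) ?Y)" by (rule mat_tr_mult_comm)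
  also have "\<dots> = mat_tr d (mat_mult d ?Y (mat_mult d ?P (mat_mult d ?F ?Y)))" by (simp only: mat_mult_assoc)
  also have "\<dots> = - mat_tr d (mat_mult d ?Y (mat_mult d ?P (mat_mult d ?Y ?F)))" by (simp only: FY mat_mult_neg_right mat_tr_neg)
  also have "\<dots> = - mat_tr d (mat_mult d ?Y (mat_mult d ?Y (mat_mult d ?P ?F)))" by (simp only: PY)
  finally have "mat_tr d (mat_mult d ?Y (mat_mult d ?Y (mat_mult d ?P ?F))) = 0" by simp
  then show ?thesis using s1 by simp
qed

lemma mat_tr_pow_R_ne_0: "mat_tr d (mat_pow d R e) \<noteq> 0"
  using mat_tr_pow_even_ne_0[OF dim_Q hermitian_Q Q_ne_0] by (simp add: R_def mat_pow_mult_self)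

definition trace_coeff :: "nat set \<Rightarrow> cmat \<Rightarrow> complex" where
  "trace_coeff T X = mat_tr d (mat_mult d R (mat_mult d X (reversed_prod m T)))"

lemma trace_coeff_sum: "trace_coeff T (\<Sum>w\<in>t. mat_scale (u w) w) = (\<Sum>w\<in>t. u w * trace_coeff T w)"
  by (simp add: trace_coeff_def mat_mult_sum_left mat_mult_sum_right mat_mult_scale_left mat_mult_scale_right mat_tr_sum mat_tr_scale)

lemma trace_coeff_ordered_prod_other: assumes "S \<subseteq> {..<m}" "T \<subseteq> {..<m}" "S \<noteq> T" shows "trace_coeff T (ordered_prod m S) = 0"
proof -
  obtain \<sigma> where e: "mat_mult d (ordered_prod m S) (reversed_prod m T) = mat_scale \<sigma> (mat_mult d (mat_pow d R (card (S \<inter> T \<inter> {..<m}))) (ordered_prod m (S - T \<union> (T - S))))"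
    using ordered_prod_reversed_prod[of m S T] by blast
  have ne: "(S - T \<union> (T - S)) \<inter> {..<m} \<noteq> {}" using assms by auto
  have "trace_coeff T (ordered_prod m S) = \<sigma> * mat_tr d (mat_mult d (mat_pow d R (Suc (card (S \<inter> T \<inter> {..<m})))) (ordered_prod m (S - T \<union> (T - S))))"
    by (simp add: trace_coeff_def e mat_mult_scale_right mat_tr_scale mat_mult_assoc)
  also have "\<dots> = 0" using mat_tr_pow_R_mult_ordered_prod[OF ne] by simp
  finally show ?thesis .
qed

lemma trace_coeff_ordered_prod_self: "trace_coeff T (ordered_prod m T) \<noteq> 0"
proof -
  have "trace_coeff T (ordered_prod m T) = mat_tr d (mat_pow d R (Suc (card (T \<inter> {..<m}))))"
    by (simp add: trace_coeff_def ordered_prod_reversed_prod_same)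
  then show ?thesis using mat_tr_pow_R_ne_0 by metis
qed

lemma inj_on_ordered_prod: "inj_on (ordered_prod m) (Pow {..<m})"
proof (rule inj_onI)
  fix S T assume ST: "S \<in> Pow {..<m}" "T \<in> Pow {..<m}" "ordered_prod m S = ordered_prod m T"
  show "S = T"
  proof (rule ccontr)
    assume "S \<noteq> T"
    with ST have "trace_coeff T (ordered_prod m S) = 0" by (intro trace_coeff_ordered_prod_other) auto
    then show False using ST(3) trace_coeff_ordered_prod_self[of T] by simp
  qed
qed

lemma independent_ordered_prods: "cmat_vs.independent (ordered_prod m ` Pow {..<m})"
  unfolding cmat_vs.dependent_explicit
proof
  assume "\<exists>t u. finite t \<and> t \<subseteq> ordered_prod m ` Pow {..<m} \<and> (\<Sum>v\<in>t. mat_scale (u v) v) = 0 \<and> (\<exists>v\<in>t. u v \<noteq> 0)"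
  then obtain t u v where t: "finite t" "t \<subseteq> ordered_prod m ` Pow {..<m}"
    and z: "(\<Sum>v\<in>t. mat_scale (u v) v) = 0" and v: "v \<in> t" "u v \<noteq> 0" by blast
  obtain T where T: "T \<in> Pow {..<m}" "v = ordered_prod m T" using t v by blast
  have other: "trace_coeff T w = 0" if w: "w \<in> t - {v}" for w
  proof -
    obtain S where S: "S \<in> Pow {..<m}" "w = ordered_prod m S" using t w by blast
    then have "S \<noteq> T" using w T by auto
    then show ?thesis using S T trace_coeff_ordered_prod_other by auto
  qed
  have "0 = trace_coeff T (\<Sum>v\<in>t. mat_scale (u v) v)" using z by (simp add: trace_coeff_def)
  also have "\<dots> = (\<Sum>w\<in>t. u w * trace_coeff T w)" by (rule trace_coeff_sum)
  also have "\<dots> = u v * trace_coeff T v + (\<Sum>w\<in>t - {v}. u w * trace_coeff T w)"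
    by (rule sum.remove[OF t(1) v(1)])
  also have "\<dots> = u v * trace_coeff T v" using other by simp
  finally show False using v(2) trace_coeff_ordered_prod_self[of T] T by simp
qed

theorem two_pow_le_dim_sq: "2 ^ m \<le> d ^ 2"
proof -
  let ?E = "(\<lambda>(k, l). mat_unit k l) ` ({..<d} \<times> {..<d})"
  have "2 ^ m = card (ordered_prod m ` Pow {..<m})"
    using inj_on_ordered_prod by (simp add: card_image card_Pow)
  also have "\<dots> \<le> card ?E"
  proof -
    have "ordered_prod m ` Pow {..<m} \<subseteq> cmat_vs.span ?E"
      using mat_dim_in_span_units mat_dim_ordered_prod by blast
    then show ?thesis using cmat_vs.independent_span_bound[OF _ independent_ordered_prods] by simp
  qed
  also have "\<dots> \<le> card ({..<d} \<times> {..<d})" by (rule card_image_le) simp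
  finally show ?thesis by (simp add: power2_eq_square)
qed

end

section \<open>The lower bound on the cpsd-rank\<close>

lemma cpsd_factorization_truncated:
  assumes "cpsd_factorization X d"
  obtains P where "\<And>x. mat_dim d (P x)" "\<And>x. herm_psd d (P x)" "\<And>x. hermitian (P x)"
    and "\<And>x y. mat_tr d (mat_mult d (P x) (P y)) = of_real (X $ x $ y)"
proof -
  obtain P where P: "\<And>x. herm_psd d (P x)" and tr: "\<And>x y. of_real (X $ x $ y) = tr_prod d (P x) (P y)"
    using assms unfolding cpsd_factorization_def by blast
  show thesis
  proof (rule that[of "\<lambda>x. mat_trunc d (P x)"])
    show "mat_tr d (mat_mult d (mat_trunc d (P x)) (mat_trunc d (P y))) = of_real (X $ x $ y)" for x y
      using tr[of x y] by (simp add: tr_prod_eq_mat_tr[symmetric] tr_prod_trunc)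
  qed (simp_all add: P herm_psd_trunc hermitian_trunc)
qed

lemma herm_psd_orth_diff_sq:
  assumes "herm_psd d A" "herm_psd d B" "mat_dim d A" "mat_dim d B"
    and "mat_tr d (mat_mult d A B) = 0"
  shows "mat_mult d (A - B) (A - B) = mat_mult d (A + B) (A + B)"
proof -
  have "mat_mult d A B = 0" by (rule herm_psd_tr_mult_0[OF assms(1,2,5)])
  moreover have "mat_mult d B A = 0"
    using assms(5) mat_tr_mult_comm[of d A B] by (intro herm_psd_tr_mult_0[OF assms(2,1)]) simp
  ultimately show ?thesis
    by (simp add: mat_mult_add_left mat_mult_add_right mat_mult_diff_left mat_mult_diff_right)
qed

lemma P_mat_factorization_signed_blocks:
  fixes C :: "real^'n^'n"
  assumes C: "C \<in> elliptope" and fac: "cpsd_factorization (P_mat C) d"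
  obtains X Q where "mat_dim d Q" "hermitian Q" "Q \<noteq> 0"
    and "\<And>i. mat_dim d (X i)" "\<And>i. hermitian (X i)" "\<And>i. mat_mult d (X i) (X i) = mat_mult d Q Q"
    and "\<And>i j. mat_tr d (mat_mult d (X i) (X j)) = of_real (C $ i $ j)"
proof -
  obtain P where dim: "\<And>x. mat_dim d (P x)" and psd: "\<And>x. herm_psd d (P x)"
    and herm: "\<And>x. hermitian (P x)"
    and tr: "\<And>x y. mat_tr d (mat_mult d (P x) (P y)) = of_real (P_mat C $ x $ y)"
    using cpsd_factorization_truncated[OF fac] by blast
  define S where "S i = P (1, i) + P (2, i)" for i
  define X where "X i = P (1, i) - P (2, i)" for i
  have trS: "mat_tr d (mat_mult d (S i) (S j)) = 1" for i j
    by (simp add: S_def mat_mult_add_left mat_mult_add_right mat_tr_add tr P_mat_entry blk_entry field_simps)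
  have dimS: "mat_dim d (S i)" "hermitian (S i)" for i by (simp_all add: S_def dim herm)
  obtain i0 :: 'n where True by blast
  define Q where "Q = S i0"
  have SQ: "S i = Q" for i
    unfolding Q_def by (rule hermitian_eqI_tr[of d]) (simp_all add: dimS trS)
  show thesis
  proof
    show "mat_dim d Q" "hermitian Q" by (simp_all add: Q_def S_def dim herm)
    show "Q \<noteq> 0" using trS[of i0 i0] by (auto simp: Q_def)
    show "mat_dim d (X i)" "hermitian (X i)" for i by (simp_all add: X_def dim herm)
    show "mat_tr d (mat_mult d (X i) (X j)) = of_real (C $ i $ j)" for i j
      by (simp add: X_def mat_mult_diff_left mat_mult_diff_right mat_tr_diff tr P_mat_entry blk_entry)
      (simp add: field_simps)
    have "C $ i $ i = 1" for i using C by (simp add: elliptope_def)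
    then show "mat_mult d (X i) (X i) = mat_mult d Q Q" for i
      unfolding X_def SQ[of i, symmetric] S_def
      by (intro herm_psd_orth_diff_sq) (simp_all add: psd dim tr P_mat_entry blk_entry)
  qed
qed

lemma gram_frame_dual_expansion:
  assumes frame: "gram_frame C s \<alpha> c"
    and X: "\<And>i. mat_dim d (X i)" "\<And>i. hermitian (X i)"
      "\<And>i j. mat_tr d (mat_mult d (X i) (X j)) = of_real (C $ i $ j)"
    and Y_def: "\<And>k. Y k = (\<Sum>i\<in>UNIV. mat_scale (of_real (c k i)) (X i))"
  shows "X i = (\<Sum>k\<in>{..<s}. mat_scale (of_real (\<alpha> i k)) (Y k))"
proof -
  have C: "\<And>i j. C $ i $ j = (\<Sum>k<s. \<alpha> i k * \<alpha> j k)"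
    and c: "\<And>k l. k < s \<Longrightarrow> l < s \<Longrightarrow> (\<Sum>i\<in>UNIV. c k i * \<alpha> i l) = (if k = l then 1 else 0)"
    using frame by (auto simp: gram_frame_def)
  have XY: "mat_tr d (mat_mult d (X i) (Y k)) = of_real (\<alpha> i k)" if "k < s" for i k
  proof -
    have "(\<Sum>j\<in>UNIV. c k j * C $ i $ j) = (\<Sum>l<s. \<alpha> i l * (\<Sum>j\<in>UNIV. c k j * \<alpha> j l))"
      by (simp add: C sum_distrib_left mult_ac) (rule sum.swap)
    also have "\<dots> = \<alpha> i k" using c that by (simp add: if_distrib[of "\<lambda>t. _ * t"] cong: if_cong)
    finally show ?thesis
      by (simp add: Y_def mat_mult_sum_right mat_mult_scale_right mat_tr_sum mat_tr_scale X(3)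
          flip: of_real_mult of_real_sum)
  qed
  have YY: "mat_tr d (mat_mult d (Y k) (Y l)) = (if k = l then 1 else 0)" if "k < s" "l < s" for k l
  proof -
    have "mat_tr d (mat_mult d (Y k) (Y l)) = (\<Sum>i\<in>UNIV. of_real (c k i) * mat_tr d (mat_mult d (X i) (Y l)))"
      by (simp add: Y_def[of k] mat_mult_sum_left mat_mult_scale_left mat_tr_sum mat_tr_scale)
    also have "\<dots> = of_real (\<Sum>i\<in>UNIV. c k i * \<alpha> i l)" using XY[OF that(2)] by simp
    finally show ?thesis using c[OF that] by simp
  qed
  define W where "W = (\<Sum>k\<in>{..<s}. mat_scale (of_real (\<alpha> i k)) (Y k))"
  have XW: "mat_tr d (mat_mult d (X i) W) = of_real (C $ i $ i)"
    by (simp add: W_def C mat_mult_sum_right mat_mult_scale_right mat_tr_sum mat_tr_scale XY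
        flip: of_real_mult)
  have "mat_tr d (mat_mult d W W)
      = (\<Sum>k\<in>{..<s}. \<Sum>l\<in>{..<s}. of_real (\<alpha> i k) * of_real (\<alpha> i l) * (if k = l then 1 else 0))"
    by (simp add: W_def mat_mult_lincomb mat_tr_sum mat_tr_scale YY)
  also have "\<dots> = of_real (C $ i $ i)" by (simp add: sum_sum_delta C)
  finally have WW: "mat_tr d (mat_mult d W W) = of_real (C $ i $ i)" .
  have "mat_dim d W" "hermitian W" by (simp_all add: W_def Y_def X mat_dim_sum hermitian_sum)
  then show ?thesis
    unfolding W_def[symmetric] by (intro hermitian_eqI_tr[of d]) (simp_all add: X XW WW)
qed

lemma extreme_elliptope_gram_null_mat:
  fixes C :: "real^'n^'n"
  assumes extreme: "C extreme_point_of elliptope" and frame: "gram_frame C s \<alpha> c"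
    and G: "\<And>k l. G k l = G l k"
      "\<And>i. (\<Sum>k\<in>{..<s}. \<Sum>l\<in>{..<s}. mat_scale (of_real (\<alpha> i k * \<alpha> i l)) (G k l)) = 0"
    and kl: "k < s" "l < s"
  shows "G k l = 0"
proof (intro ext)
  fix p q :: nat
  have entry: "(\<Sum>k<s. \<Sum>l<s. \<alpha> i k * f (G k l p q) * \<alpha> i l) = 0"
    if "f = Re \<or> f = Im" for f :: "complex \<Rightarrow> real" and i
  proof -
    have "(\<Sum>k<s. \<Sum>l<s. of_real (\<alpha> i k * \<alpha> i l) * G k l p q) = 0"
      using fun_cong[OF fun_cong[OF G(2)[of i]], of p q] by (simp add: sum_apply2 mat_scale_def)
    then show ?thesis using that by (auto simp: Re_sum Im_sum mult_ac dest: arg_cong[where f = f])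
  qed
  have "Re (G k l p q) = 0"
    by (rule extreme_elliptope_gram_null[OF extreme frame, where T="\<lambda>k l. Re (G k l p q)"])
      (use G(1) entry kl in auto)
  moreover have "Im (G k l p q) = 0"
    by (rule extreme_elliptope_gram_null[OF extreme frame, where T="\<lambda>k l. Im (G k l p q)"])
      (use G(1) entry kl in auto)
  ultimately
  show "G k l p q = 0 p q" by (simp add: complex_eq_iff)
qed

lemma extreme_elliptope_anticomm:
  fixes C :: "real^'n^'n"
  assumes extreme: "C extreme_point_of elliptope" and frame: "gram_frame C s \<alpha> c"
    and Y: "\<And>i. (\<Sum>k\<in>{..<s}. \<Sum>l\<in>{..<s}. mat_scale (of_real (\<alpha> i k * \<alpha> i l)) (mat_mult d (Y k) (Y l))) = R"
    and kl: "k < s" "l < s"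
  shows "mat_mult d (Y k) (Y l) + mat_mult d (Y l) (Y k) = mat_scale (2 * (if k = l then 1 else 0)) R"
proof -
  define G where "G k l = mat_mult d (Y k) (Y l) + mat_mult d (Y l) (Y k) - mat_scale (2 * (if k = l then 1 else 0)) R" for k l
  have norm: "(\<Sum>k<s. \<alpha> i k * \<alpha> i k) = 1" for i
  proof -
    have "C $ i $ i = 1" using extreme by (simp add: extreme_point_of_def elliptope_def)
    then show ?thesis using frame by (simp add: gram_frame_def)
  qed
  have Gsym: "G k l = G l k" for k l by (simp add: G_def add.commute eq_commute[of k l])
  have Gsum: "(\<Sum>k\<in>{..<s}. \<Sum>l\<in>{..<s}. mat_scale (of_real (\<alpha> i k * \<alpha> i l)) (G k l)) = 0" for i
  proof -
    have swap: "(\<Sum>k\<in>{..<s}. \<Sum>l\<in>{..<s}. mat_scale (of_real (\<alpha> i k * \<alpha> i l)) (mat_mult d (Y l) (Y k))) = R"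
      using Y[of i] by (subst sum.swap) (simp add: mult.commute)
    have "(\<Sum>k\<in>{..<s}. \<Sum>l\<in>{..<s}. mat_scale (of_real (\<alpha> i k * \<alpha> i l)) (mat_scale (2 * (if k = l then 1 else 0)) R))
        = mat_scale (2 * (\<Sum>k\<in>{..<s}. \<Sum>l\<in>{..<s}. of_real (\<alpha> i k) * of_real (\<alpha> i l) * (if k = l then 1 else 0))) R"
      by (simp add: mat_scale_scale sum_mat_scale sum_distrib_left mult_ac)
    also have "\<dots> = mat_scale 2 R"
    proof -
      have "(\<Sum>k\<in>{..<s}. \<Sum>l\<in>{..<s}. of_real (\<alpha> i k) * of_real (\<alpha> i l) * (if k = l then 1 else 0))
          = (\<Sum>k\<in>{..<s}. of_real (\<alpha> i k) * (of_real (\<alpha> i k) :: complex))"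
        by (rule sum_sum_delta) simp
      also have "\<dots> = 1" using arg_cong[OF norm[of i], of "of_real :: real \<Rightarrow> complex"] by simp
      finally show ?thesis by simp
    qed
    finally have diag: "(\<Sum>k\<in>{..<s}. \<Sum>l\<in>{..<s}. mat_scale (of_real (\<alpha> i k * \<alpha> i l)) (mat_scale (2 * (if k = l then 1 else 0)) R))
        = mat_scale 2 R" .
    show ?thesis
      unfolding G_def mat_scale_add mat_scale_diff sum.distrib sum_subtractf Y swap diag by (simp add: mat_add_self)
  qed
  have "G k l = 0" by (rule extreme_elliptope_gram_null_mat[OF extreme frame Gsym Gsum kl])
  then show ?thesis by (simp add: G_def)
qed

lemma extreme_elliptope_clifford_family:
  fixes C :: "real^'n^'n"
  assumes extreme: "C extreme_point_of elliptope"
    and Q: "mat_dim d Q" "hermitian Q" "Q \<noteq> 0"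
    and X: "\<And>i. mat_dim d (X i)" "\<And>i. hermitian (X i)" "\<And>i. mat_mult d (X i) (X i) = mat_mult d Q Q"
      "\<And>i j. mat_tr d (mat_mult d (X i) (X j)) = of_real (C $ i $ j)"
  shows "\<exists>Y. clifford_family d (2 * (rank C div 2)) Y Q"
proof -
  have "psd_real C" using extreme by (simp add: extreme_point_of_def elliptope_def)
  then obtain s \<alpha> c where frame: "gram_frame C s \<alpha> c" and rank: "rank C \<le> s"
    using psd_real_gram_frame by blast
  define Y where "Y k = (\<Sum>i\<in>UNIV. mat_scale (of_real (c k i)) (X i))" for k
  have "(\<Sum>k\<in>{..<s}. \<Sum>l\<in>{..<s}. mat_scale (of_real (\<alpha> i k * \<alpha> i l)) (mat_mult d (Y k) (Y l))) = mat_mult d Q Q" for i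
  proof -
    have "mat_mult d Q Q = mat_mult d (X i) (X i)" using X(3) by simp
    also have "\<dots> = (\<Sum>k\<in>{..<s}. \<Sum>l\<in>{..<s}. mat_scale (of_real (\<alpha> i k) * of_real (\<alpha> i l)) (mat_mult d (Y k) (Y l)))"
      unfolding gram_frame_dual_expansion[OF frame X(1,2,4) Y_def] by (rule mat_mult_lincomb)
    finally show ?thesis by simp
  qed
  then have anticomm: "mat_mult d (Y k) (Y l) + mat_mult d (Y l) (Y k) = mat_scale (2 * (if k = l then 1 else 0)) (mat_mult d Q Q)"
    if "k < s" "l < s" for k l
    using extreme_elliptope_anticomm[OF extreme frame _ that] by blast
  have "clifford_family d (2 * (rank C div 2)) Y Q"
  proof
    show "mat_dim d (Y k)" for k by (simp add: Y_def X)
    show "mat_dim d Q" "hermitian Q" "Q \<noteq> 0" by (fact Q)+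
    show "mat_mult d (Y k) (Y l) + mat_mult d (Y l) (Y k) = mat_scale (2 * (if k = l then 1 else 0)) (mat_mult d Q Q)"
      if "k < 2 * (rank C div 2)" "l < 2 * (rank C div 2)" for k l
      using anticomm that rank by simp
  qed simp
  then show ?thesis by blast
qed

lemma P_mat_cpsd_factorization_lower_bound:
  fixes C :: "real^'n^'n"
  assumes extreme: "C extreme_point_of elliptope" and fac: "cpsd_factorization (P_mat C) d"
  shows "2 ^ (rank C div 2) \<le> d"
proof -
  have C: "C \<in> elliptope" using extreme by (simp add: extreme_point_of_def)
  obtain Q X where "mat_dim d Q" "hermitian Q" "Q \<noteq> 0"
    and "\<And>i. mat_dim d (X i)" "\<And>i. hermitian (X i)" "\<And>i. mat_mult d (X i) (X i) = mat_mult d Q Q"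
      "\<And>i j. mat_tr d (mat_mult d (X i) (X j)) = of_real (C $ i $ j)"
    by (rule P_mat_factorization_signed_blocks[OF C fac], rule that)
  then obtain Y where "clifford_family d (2 * (rank C div 2)) Y Q"
    using extreme_elliptope_clifford_family[OF extreme] by blast
  then have "2 ^ (2 * (rank C div 2)) \<le> d ^ 2" by (rule clifford_family.two_pow_le_dim_sq)
  then have "(2 ^ (rank C div 2)) ^ 2 \<le> d ^ 2" by (metis power_mult mult.commute)
  then show ?thesis by (rule power2_le_imp_le) simp
qed

theorem theorem3p1:
  fixes C :: "real^'n^'n"
  assumes "C extreme_point_of elliptope"
  shows "cpsd (P_mat C) \<and> cpsd_rank (P_mat C) \<ge> 2 ^ (rank C div 2)"
proof -
  have C: "C \<in> elliptope" using assms by (simp add: extreme_point_of_def)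
  then obtain d where fac: "cpsd_factorization (P_mat C) d" using P_mat_cpsd_factorization by blast
  have "transpose (P_mat C) = P_mat C"
    using psd_real_sym[of C] C
    by (simp add: elliptope_def vec_eq_iff transpose_def P_mat_entry blk_entry)
  then have "cpsd (P_mat C)" using fac by (auto simp: cpsd_def)
  moreover have "cpsd_factorization (P_mat C) (cpsd_rank (P_mat C))"
    unfolding cpsd_rank_def using fac by (rule LeastI)
  then have "2 ^ (rank C div 2) \<le> cpsd_rank (P_mat C)"
    by (rule P_mat_cpsd_factorization_lower_bound[OF assms])
  ultimately show ?thesis by simp
qed

end
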